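(* Let $R(m,n)$ be a rectangular supergrid graph with $m\ge 3$ and $n\ge 2$, let $s,t$ be two distinct vertices of it, and let $w=(1,1)$ and $z=(2,1)$. Assume that the following conditions fail: (F1) $\{s,t\}$ is a vertex cut of $R(m,n)$, i.e. $n=2$ and $2\le s_x=t_x\le m-1$; (F2) either $n=2$ and $\{s,t\}\in\{\{(1,1),(2,1)\},\{(1,1),(2,2)\},\{(2,1),(1,2)\}\}$, or $n\ge 3$ and $\{s,t\}=\{w,z\}$. Then there exists a Hamiltonian $(s,t)$-path $Q$ of $R(m,n)$ such that the edge $(w,z)$ belongs to $Q$.
   Context: The rectangular supergrid graph $R(m,n)$ has vertex set $\{(x,y)\in\mathbb{Z}^2:1\le x\le m,\ 1\le y\le n\}$, two distinct vertices $u=(u_x,u_y)$, $v=(v_x,v_y)$ being adjacent iff $|u_x-v_x|\le 1$ and $|u_y-v_y|\le 1$. A set $V_1$ of vertices of a connected graph $G$ is a vertex cut if $G-V_1$ is disconnected. A Hamiltonian $(s,t)$-path is a simple path from $s$ to $t$ visiting every vertex exactly once. *)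

theory Defs
  imports Main
begin

type_synonym vtx = "int \<times> int"

definition R :: "int \<Rightarrow> int \<Rightarrow> vtx set" where
  "R m n = {(x, y). 1 \<le> x \<and> x \<le> m \<and> 1 \<le> y \<and> y \<le> n}"

definition sadj :: "vtx \<Rightarrow> vtx \<Rightarrow> bool" where
  "sadj u v \<longleftrightarrow> u \<noteq> v \<and> \<bar>fst u - fst v\<bar> \<le> 1 \<and> \<bar>snd u - snd v\<bar> \<le> 1"

definition is_path_in :: "vtx set \<Rightarrow> vtx list \<Rightarrow> bool" where
  "is_path_in V p \<longleftrightarrow> p \<noteq> [] \<and> set p \<subseteq> V \<and>
     (\<forall>i. Suc i < length p \<longrightarrow> sadj (p ! i) (p ! Suc i))"

definition connected_on :: "vtx set \<Rightarrow> bool" where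
  "connected_on V \<longleftrightarrow> (\<forall>u\<in>V. \<forall>v\<in>V. \<exists>p. is_path_in V p \<and> hd p = u \<and> last p = v)"

definition vertex_cut :: "vtx set \<Rightarrow> vtx set \<Rightarrow> bool" where
  "vertex_cut V V1 \<longleftrightarrow> V1 \<subseteq> V \<and> \<not> connected_on (V - V1)"

definition ham_path :: "vtx set \<Rightarrow> vtx \<Rightarrow> vtx \<Rightarrow> vtx list \<Rightarrow> bool" where
  "ham_path V s t p \<longleftrightarrow> is_path_in V p \<and> distinct p \<and> set p = V \<and> hd p = s \<and> last p = t"

definition edge_in_path :: "vtx \<Rightarrow> vtx \<Rightarrow> vtx list \<Rightarrow> bool" where
  "edge_in_path u v p \<longleftrightarrow> (\<exists>i. Suc i < length p \<and>
     ((p ! i = u \<and> p ! Suc i = v) \<or> (p ! i = v \<and> p ! Suc i = u)))"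

end

theory Submission
  imports Defs
begin

text \<open>Induction on \<open>m + n\<close>: for \<open>m \<ge> 5\<close> the last two columns are split off, for \<open>m \<le> 4\<close> and
  \<open>n \<ge> 6\<close> the top two rows (by transposition the same two-column strip constructions apply),
  and the grids with \<open>3 \<le> m \<le> 4\<close>, \<open>2 \<le> n \<le> 5\<close> are settled by tabulated paths checked by
  evaluation. For the step to go through, the path carries more than the edge \<open>(1,1)(2,1)\<close>: it also
  uses a vertical edge in the last column and, for \<open>m \<le> 4 \<le> n\<close>, a horizontal edge in the top row.
  If both ends lie in the smaller grid, such an edge is replaced by a detour through the new strip;
  if one end lies in the strip, a Hamiltonian path of the strip ending in its inner column is
  continued into the smaller grid; if both do, the strip is covered by two paths whose free ends, in
  different rows of the inner column, are joined through the smaller grid. The ends chosen in the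
  smaller grid lie in its last column (or row), so they are never separating or forbidden there.\<close>

section \<open>Vertex lists and their edges\<close>

definition path_edges :: "'a list \<Rightarrow> ('a \<times> 'a) set" where
  "path_edges p = set (zip p (tl p))"

lemma path_edges_Nil [simp]: "path_edges [] = {}"
  and path_edges_singleton [simp]: "path_edges [x] = {}"
  and path_edges_Cons_Cons [simp]: "path_edges (x # y # p) = insert (x, y) (path_edges (y # p))"
  by (simp_all add: path_edges_def)

lemma path_edges_append:
  "p \<noteq> [] \<Longrightarrow> q \<noteq> [] \<Longrightarrow> path_edges (p @ q) = path_edges p \<union> path_edges q \<union> {(last p, hd q)}"
proof (induction p rule: induct_list012)
  case (3 x y p)
  then show ?case by auto
qed (auto simp: neq_Nil_conv)

lemma path_edges_append_subset:
  "path_edges p \<subseteq> path_edges (p @ q)" "path_edges q \<subseteq> path_edges (p @ q)"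
  by (cases "p = []"; cases "q = []"; simp add: path_edges_append; blast)+

lemma path_edges_rev: "path_edges (rev p) = prod.swap ` path_edges p"
proof (induction p rule: induct_list012)
  case (3 x y p)
  have "path_edges (rev (x # y # p)) = path_edges (rev (y # p)) \<union> {(y, x)}"
    using path_edges_append[of "rev (y # p)" "[x]"] by (simp add: last_rev)
  then show ?case using "3.IH"(2) by auto
qed simp_all

lemma path_edges_map: "path_edges (map f p) = map_prod f f ` path_edges p"
  by (induction p rule: induct_list012) auto

lemma path_edges_conv_nth: "path_edges p = {(p ! i, p ! Suc i) | i. Suc i < length p}"
  unfolding path_edges_def by (auto simp: set_zip nth_tl)

lemma path_edges_subset_set: "(u, v) \<in> path_edges p \<Longrightarrow> u \<in> set p \<and> v \<in> set p"
  unfolding path_edges_conv_nth by auto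

lemma path_edges_split: "(u, v) \<in> path_edges p \<Longrightarrow> \<exists>xs ys. p = xs @ u # v # ys"
proof (induction p rule: induct_list012)
  case (3 x y p)
  then show ?case by (metis append_Cons append_Nil insert_iff path_edges_Cons_Cons prod.inject)
qed simp_all

lemma sadj_commute: "sadj u v \<longleftrightarrow> sadj v u"
  by (auto simp: sadj_def abs_minus_commute)

lemma is_path_in_iff:
  "is_path_in V p \<longleftrightarrow> p \<noteq> [] \<and> set p \<subseteq> V \<and> (\<forall>(u, v)\<in>path_edges p. sadj u v)"
  unfolding is_path_in_def path_edges_conv_nth by blast

lemma ham_path_iff:
  "ham_path V s t p \<longleftrightarrow> p \<noteq> [] \<and> distinct p \<and> set p = V \<and> hd p = s \<and> last p = t \<and>
     (\<forall>(u, v)\<in>path_edges p. sadj u v)"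
  unfolding ham_path_def is_path_in_iff by blast

lemma edge_in_path_iff: "edge_in_path u v p \<longleftrightarrow> (u, v) \<in> path_edges p \<or> (v, u) \<in> path_edges p"
  unfolding edge_in_path_def path_edges_conv_nth by auto

lemma edge_in_path_commute: "edge_in_path u v p \<longleftrightarrow> edge_in_path v u p"
  unfolding edge_in_path_iff by blast

lemma edge_in_path_mono: "edge_in_path u v p \<Longrightarrow> path_edges p \<subseteq> path_edges q \<Longrightarrow> edge_in_path u v q"
  unfolding edge_in_path_iff by blast

lemma edge_in_path_appendI:
  "edge_in_path u v p \<Longrightarrow> edge_in_path u v (p @ q)" "edge_in_path u v q \<Longrightarrow> edge_in_path u v (p @ q)"
  using edge_in_path_mono path_edges_append_subset by blast+

lemma edge_in_path_set: "edge_in_path u v p \<Longrightarrow> u \<in> set p \<and> v \<in> set p"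
  unfolding edge_in_path_iff by (auto dest: path_edges_subset_set)

lemma edge_in_path_append_junction:
  "p \<noteq> [] \<Longrightarrow> q \<noteq> [] \<Longrightarrow> edge_in_path (last p) (hd q) (p @ q)"
  unfolding edge_in_path_iff by (simp add: path_edges_append)

lemma edge_in_path_rev [simp]: "edge_in_path u v (rev p) \<longleftrightarrow> edge_in_path u v p"
  unfolding edge_in_path_iff path_edges_rev by force

lemma edge_in_path_map: "edge_in_path u v p \<Longrightarrow> edge_in_path (f u) (f v) (map f p)"
  unfolding edge_in_path_iff path_edges_map by force

lemma ham_path_singleton: "ham_path {v} v v [v]"
  by (simp add: ham_path_iff)

lemma ham_path_of_list:
  "p \<noteq> [] \<Longrightarrow> distinct p \<Longrightarrow> \<forall>(u, v)\<in>path_edges p. sadj u v \<Longrightarrow> ham_path (set p) (hd p) (last p) p"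
  by (simp add: ham_path_iff)

lemma ham_path_endpoints: "ham_path V s t p \<Longrightarrow> s \<in> V \<and> t \<in> V"
  unfolding ham_path_iff by force

lemma ham_path_rev: "ham_path V s t p \<Longrightarrow> ham_path V t s (rev p)"
  unfolding ham_path_iff path_edges_rev by (auto simp: hd_rev last_rev sadj_commute)

lemma ham_path_map:
  assumes "ham_path V s t p" "inj_on f V" "\<And>u v. sadj u v \<Longrightarrow> sadj (f u) (f v)"
  shows "ham_path (f ` V) (f s) (f t) (map f p)"
  using assms unfolding ham_path_iff path_edges_map by (fastforce simp: distinct_map hd_map last_map)

lemma ham_path_append:
  assumes "ham_path A s x p" "ham_path B y t q" "A \<inter> B = {}" "sadj x y"
  shows "ham_path (A \<union> B) s t (p @ q)"
  using assms unfolding ham_path_iff by (auto simp: path_edges_append)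

lemma ham_path_append3:
  assumes "ham_path A s x p" "ham_path B y z q" "ham_path C w t r"
    "A \<inter> B = {}" "A \<inter> C = {}" "B \<inter> C = {}" "sadj x y" "sadj z w"
  shows "ham_path (A \<union> B \<union> C) s t (p @ q @ r)"
  using ham_path_append[OF assms(1) ham_path_append[OF assms(2,3,6,8)]] assms(4,5,7)
  by (simp add: Un_assoc Int_Un_distrib)

lemma ham_path_appendD:
  assumes "ham_path V s t (p @ q)" "p \<noteq> []" "q \<noteq> []"
  shows "ham_path (set p) s (last p) p" "ham_path (set q) (hd q) t q"
  using assms unfolding ham_path_iff by (auto simp: path_edges_append)

lemma ham_path_detour_oriented:
  assumes L: "ham_path V s t L" "(p, q) \<in> path_edges L"
    and M: "ham_path B b c M" "V \<inter> B = {}" "sadj p b" "sadj c q"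
  obtains L' where "ham_path (V \<union> B) s t L'"
    "path_edges L - {(p, q)} \<subseteq> path_edges L'" "path_edges M \<subseteq> path_edges L'"
proof -
  obtain xs ys where L_eq: "L = (xs @ [p]) @ q # ys"
    using path_edges_split[OF L(2)] by auto
  have P: "ham_path (set (xs @ [p])) s p (xs @ [p])" and Q: "ham_path (set (q # ys)) q t (q # ys)"
    using ham_path_appendD[of V s t "xs @ [p]" "q # ys"] L(1) L_eq by auto
  have disj: "set (xs @ [p]) \<inter> set (q # ys) = {}" "set (xs @ [p]) \<inter> B = {}" "set (q # ys) \<inter> B = {}"
    using L(1) M(2) unfolding L_eq ham_path_iff by auto
  have "ham_path (B \<union> set (q # ys)) b t (M @ q # ys)"
    by (rule ham_path_append[OF M(1) Q]) (use disj M(4) in auto)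
  then have "ham_path (set (xs @ [p]) \<union> (B \<union> set (q # ys))) s t ((xs @ [p]) @ M @ q # ys)"
    by (rule ham_path_append[OF P]) (use disj M(3) in auto)
  moreover have "set (xs @ [p]) \<union> (B \<union> set (q # ys)) = V \<union> B"
    using L(1) unfolding L_eq ham_path_iff by auto
  moreover have "M \<noteq> []" using M(1) by (simp add: ham_path_iff)
  then have "path_edges ((xs @ [p]) @ M @ q # ys) =
      path_edges (xs @ [p]) \<union> (path_edges M \<union> path_edges (q # ys) \<union> {(last M, q)}) \<union> {(p, hd M)}"
    using path_edges_append[of "xs @ [p]" "M @ q # ys"] path_edges_append[of M "q # ys"] by simp
  moreover have "path_edges L = path_edges (xs @ [p]) \<union> path_edges (q # ys) \<union> {(p, q)}"
    using path_edges_append[of "xs @ [p]" "q # ys"] unfolding L_eq by simp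
  ultimately show ?thesis using that[of "(xs @ [p]) @ M @ q # ys"] by auto
qed

lemma ham_path_detour:
  assumes L: "ham_path V s t L" "edge_in_path p q L"
    and M: "ham_path B b c M" "V \<inter> B = {}" "sadj p b" "sadj q c"
  obtains L' where "ham_path (V \<union> B) s t L'"
    "\<And>u v. edge_in_path u v L \<Longrightarrow> {u, v} \<noteq> {p, q} \<Longrightarrow> edge_in_path u v L'"
    "\<And>u v. edge_in_path u v M \<Longrightarrow> edge_in_path u v L'"
proof -
  have keep: "edge_in_path u v L'"
    if "edge_in_path u v L" "{u, v} \<noteq> {p, q}" "path_edges L - {e} \<subseteq> path_edges L'"
       "e = (p, q) \<or> e = (q, p)" for u v L' e
    using that unfolding edge_in_path_iff by (auto simp: doubleton_eq_iff)
  consider "(p, q) \<in> path_edges L" | "(q, p) \<in> path_edges L"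
    using L(2) edge_in_path_iff by blast
  then show ?thesis
  proof cases
    case 1
    obtain L' where L': "ham_path (V \<union> B) s t L'"
      "path_edges L - {(p, q)} \<subseteq> path_edges L'" "path_edges M \<subseteq> path_edges L'"
      using ham_path_detour_oriented[OF L(1) 1 M(1,2,3)] M(4) sadj_commute by blast
    show ?thesis
      by (rule that[OF L'(1)]) (use keep[OF _ _ L'(2)] edge_in_path_mono[OF _ L'(3)] in auto)
  next
    case 2
    obtain L' where L': "ham_path (V \<union> B) s t L'"
      "path_edges L - {(q, p)} \<subseteq> path_edges L'" "path_edges (rev M) \<subseteq> path_edges L'"
      using ham_path_detour_oriented[OF L(1) 2 ham_path_rev[OF M(1)] M(2)] M(3,4) sadj_commute by blast
    show ?thesis
      by (rule that[OF L'(1)]) (use keep[OF _ _ L'(2)] edge_in_path_mono[OF _ L'(3)] in auto)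
  qed
qed

definition column_edge :: "int \<Rightarrow> vtx list \<Rightarrow> bool" where
  "column_edge x p \<longleftrightarrow> (\<exists>y. edge_in_path (x, y) (x, y + 1) p)"

definition row_edge :: "int \<Rightarrow> vtx list \<Rightarrow> bool" where
  "row_edge y p \<longleftrightarrow> (\<exists>x. edge_in_path (x, y) (x + 1, y) p)"

lemma column_edgeI:
  assumes "edge_in_path u v p" "sadj u v" "fst u = fst v"
  shows "column_edge (fst u) p"
proof -
  obtain x y y' where uv: "u = (x, y)" "v = (x, y')" using assms(3) by (metis prod.collapse)
  then have "y' = y + 1 \<or> y = y' + 1" using assms(2) by (auto simp: sadj_def)
  then show ?thesis
    using assms(1) uv edge_in_path_commute unfolding column_edge_def by auto
qed

lemma row_edgeI:
  assumes "edge_in_path u v p" "sadj u v" "snd u = snd v"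
  shows "row_edge (snd u) p"
proof -
  obtain x x' y where uv: "u = (x, y)" "v = (x', y)" using assms(3) by (metis prod.collapse)
  then have "x' = x + 1 \<or> x = x' + 1" using assms(2) by (auto simp: sadj_def)
  then show ?thesis
    using assms(1) uv edge_in_path_commute unfolding row_edge_def by auto
qed

lemma column_edge_appendI: "column_edge x p \<Longrightarrow> column_edge x (p @ q)" "column_edge x q \<Longrightarrow> column_edge x (p @ q)"
  unfolding column_edge_def using edge_in_path_appendI by blast+

lemma row_edge_appendI: "row_edge y p \<Longrightarrow> row_edge y (p @ q)" "row_edge y q \<Longrightarrow> row_edge y (p @ q)"
  unfolding row_edge_def using edge_in_path_appendI by blast+

lemma column_edge_rev [simp]: "column_edge x (rev p) \<longleftrightarrow> column_edge x p"
  by (simp add: column_edge_def)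

lemma row_edge_rev [simp]: "row_edge y (rev p) \<longleftrightarrow> row_edge y p"
  by (simp add: row_edge_def)

lemma row_edge_map_swap: "column_edge x p \<Longrightarrow> row_edge x (map prod.swap p)"
  unfolding column_edge_def row_edge_def by (metis edge_in_path_map swap_simp)

lemma sadj_swap: "sadj (prod.swap u) (prod.swap v) \<longleftrightarrow> sadj u v"
  by (cases u; cases v) (auto simp: sadj_def)

lemma ham_path_swap:
  "ham_path V s t p \<Longrightarrow> ham_path (prod.swap ` V) (prod.swap s) (prod.swap t) (map prod.swap p)"
  by (rule ham_path_map) (auto simp: sadj_swap)

section \<open>Hamiltonian paths of two-column strips\<close>

definition column_path :: "int \<Rightarrow> int \<Rightarrow> int \<Rightarrow> vtx list" where
  "column_path x a b = map (Pair x) [a..b]"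

lemma ham_path_column_path: "a \<le> b \<Longrightarrow> ham_path ({x} \<times> {a..b}) (x, a) (x, b) (column_path x a b)"
proof (induction b rule: int_ge_induct)
  case base
  then show ?case by (simp add: column_path_def ham_path_singleton)
next
  case (step b)
  have "column_path x a (b + 1) = column_path x a b @ [(x, b + 1)]"
    using step(1) by (simp add: column_path_def upto_rec2)
  moreover have "{x} \<times> {a..b + 1} = {x} \<times> {a..b} \<union> {(x, b + 1)}"
    using step(1) by auto
  ultimately show ?case
    using ham_path_append[OF step(2) ham_path_singleton] by (simp add: sadj_def)
qed

lemma column_edge_column_path: "a < b \<Longrightarrow> column_edge x (column_path x a b)"
  unfolding column_edge_def edge_in_path_iff column_path_def
  by (rule exI[of _ a]) (simp add: upto_rec1)

lemma ham_path_snoc_column_step: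
  assumes "ham_path B u (x, j) p" "(x, i) \<notin> B" "j = i + 1 \<or> i = j + 1"
  shows "ham_path (B \<union> {(x, i)}) u (x, i) (p @ [(x, i)])" "column_edge x (p @ [(x, i)])"
proof -
  show "ham_path (B \<union> {(x, i)}) u (x, i) (p @ [(x, i)])"
    by (rule ham_path_append[OF assms(1) ham_path_singleton]) (use assms(2,3) in \<open>auto simp: sadj_def\<close>)
  have "p \<noteq> []" "last p = (x, j)" using assms(1) by (auto simp: ham_path_iff)
  then have "edge_in_path (x, j) (x, i) (p @ [(x, i)])"
    using edge_in_path_append_junction[of p "[(x, i)]"] by simp
  then show "column_edge x (p @ [(x, i)])"
    using assms(3) edge_in_path_commute unfolding column_edge_def by blast
qed

definition u_turn :: "int \<Rightarrow> int \<Rightarrow> int \<Rightarrow> int \<Rightarrow> vtx list" where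
  "u_turn a lo hi y = rev (column_path a lo y) @ column_path (a + 1) lo hi @ rev (column_path a (y + 1) hi)"

lemma ham_path_u_turn:
  assumes "lo \<le> y" "y < hi"
  shows "ham_path ({a, a + 1} \<times> {lo..hi}) (a, y) (a, y + 1) (u_turn a lo hi y)"
proof -
  have "ham_path ({a + 1} \<times> {lo..hi} \<union> {a} \<times> {y + 1..hi}) (a + 1, lo) (a, y + 1)
      (column_path (a + 1) lo hi @ rev (column_path a (y + 1) hi))"
    by (rule ham_path_append[OF ham_path_column_path ham_path_rev[OF ham_path_column_path]])
      (use assms in \<open>auto simp: sadj_def\<close>)
  then have "ham_path ({a} \<times> {lo..y} \<union> ({a + 1} \<times> {lo..hi} \<union> {a} \<times> {y + 1..hi})) (a, y) (a, y + 1)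
      (u_turn a lo hi y)"
    unfolding u_turn_def
    by (rule ham_path_append[OF ham_path_rev[OF ham_path_column_path[OF assms(1)]]])
      (use assms in \<open>auto simp: sadj_def\<close>)
  moreover have "{a} \<times> {lo..y} \<union> ({a + 1} \<times> {lo..hi} \<union> {a} \<times> {y + 1..hi}) = {a, a + 1} \<times> {lo..hi}"
    using assms by auto
  ultimately show ?thesis by simp
qed

lemma column_edge_u_turn: "lo < hi \<Longrightarrow> column_edge (a + 1) (u_turn a lo hi y)"
  unfolding u_turn_def by (intro column_edge_appendI column_edge_column_path)

lemma ham_path_column_pair:
  assumes "lo \<le> hi"
  shows "ham_path ({a, a + 1} \<times> {lo..hi}) (a + 1, lo) (a, lo)
           (column_path (a + 1) lo hi @ rev (column_path a lo hi))"
    and "ham_path ({a, a + 1} \<times> {lo..hi}) (a + 1, hi) (a, hi)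
           (rev (column_path (a + 1) lo hi) @ column_path a lo hi)"
proof -
  have strip: "{a + 1} \<times> {lo..hi} \<union> {a} \<times> {lo..hi} = {a, a + 1} \<times> {lo..hi}" by auto
  have "ham_path ({a + 1} \<times> {lo..hi} \<union> {a} \<times> {lo..hi}) (a + 1, lo) (a, lo)
      (column_path (a + 1) lo hi @ rev (column_path a lo hi))"
    by (rule ham_path_append[OF ham_path_column_path[OF assms] ham_path_rev[OF ham_path_column_path[OF assms]]])
      (auto simp: sadj_def)
  then show "ham_path ({a, a + 1} \<times> {lo..hi}) (a + 1, lo) (a, lo)
      (column_path (a + 1) lo hi @ rev (column_path a lo hi))"
    unfolding strip .
  have "ham_path ({a + 1} \<times> {lo..hi} \<union> {a} \<times> {lo..hi}) (a + 1, hi) (a, hi)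
      (rev (column_path (a + 1) lo hi) @ column_path a lo hi)"
    by (rule ham_path_append[OF ham_path_rev[OF ham_path_column_path[OF assms]] ham_path_column_path[OF assms]])
      (auto simp: sadj_def)
  then show "ham_path ({a, a + 1} \<times> {lo..hi}) (a + 1, hi) (a, hi)
      (rev (column_path (a + 1) lo hi) @ column_path a lo hi)"
    unfolding strip .
qed

lemma strip_ham_path_from_outer_column:
  assumes "lo \<le> r" "r \<le> hi"
  obtains y P where "lo \<le> y" "y \<le> hi" "ham_path ({a, a + 1} \<times> {lo..hi}) (a + 1, r) (a, y) P"
    "lo < hi \<Longrightarrow> column_edge (a + 1) P"
proof -
  consider "r = hi" | "r = lo" "lo < hi" | "lo < r" "r < hi" using assms by linarith
  then show ?thesis
  proof cases
    case 1
    have "lo < hi \<Longrightarrow> column_edge (a + 1) (rev (column_path (a + 1) lo hi) @ column_path a lo hi)"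
      by (simp add: column_edge_appendI(1) column_edge_column_path)
    moreover have "ham_path ({a, a + 1} \<times> {lo..hi}) (a + 1, r) (a, hi)
        (rev (column_path (a + 1) lo hi) @ column_path a lo hi)"
      using ham_path_column_pair(2)[of lo hi a] 1 assms by simp
    ultimately show ?thesis
      using that[of hi] assms by simp
  next
    case 2
    have "column_edge (a + 1) (column_path (a + 1) lo hi @ rev (column_path a lo hi))"
      using 2 by (simp add: column_edge_appendI(1) column_edge_column_path)
    moreover have "ham_path ({a, a + 1} \<times> {lo..hi}) (a + 1, r) (a, lo)
        (column_path (a + 1) lo hi @ rev (column_path a lo hi))"
      using ham_path_column_pair(1)[of lo hi a] 2 by simp
    ultimately show ?thesis
      using that[of lo] 2 by simp
  next
    case 3
    let ?P = "(column_path (a + 1) r hi @ rev (column_path a r hi)) @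
              (rev (column_path (a + 1) lo (r - 1)) @ column_path a lo (r - 1))"
    have "ham_path ({a, a + 1} \<times> {r..hi} \<union> {a, a + 1} \<times> {lo..r - 1}) (a + 1, r) (a, r - 1) ?P"
      by (rule ham_path_append[OF ham_path_column_pair(1) ham_path_column_pair(2)])
        (use 3 in \<open>auto simp: sadj_def\<close>)
    moreover have "{a, a + 1} \<times> {r..hi} \<union> {a, a + 1} \<times> {lo..r - 1} = {a, a + 1} \<times> {lo..hi}"
      using 3 by auto
    moreover have "column_edge (a + 1) ?P"
      using 3 by (simp add: column_edge_appendI(1) column_edge_column_path)
    ultimately show ?thesis
      using that[of "r - 1"] 3 by simp
  qed
qed

lemma strip_ham_path_from_inner_column:
  assumes "lo \<le> r" "r \<le> hi" "lo < hi"
  obtains y P where "lo \<le> y" "y \<le> hi" "ham_path ({a, a + 1} \<times> {lo..hi}) (a, r) (a, y) P"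
    "column_edge (a + 1) P"
proof (cases "r = hi")
  case True
  have "ham_path ({a, a + 1} \<times> {lo..hi}) (a, hi) (a, hi - 1) (rev (u_turn a lo hi (hi - 1)))"
    using ham_path_rev[OF ham_path_u_turn[of lo "hi - 1" hi]] assms by simp
  then show ?thesis
    using that[of "hi - 1"] column_edge_u_turn[of lo hi a] assms True by simp
next
  case False
  then show ?thesis
    using that[OF _ _ ham_path_u_turn[of lo r hi]] column_edge_u_turn assms by simp
qed

lemma strip_ham_path_to_inner_column:
  assumes "p \<in> {a, a + 1} \<times> {lo..hi}" "lo < hi \<or> fst p = a + 1"
  obtains y P where "lo \<le> y" "y \<le> hi" "ham_path ({a, a + 1} \<times> {lo..hi}) p (a, y) P"
    "lo < hi \<Longrightarrow> column_edge (a + 1) P"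
proof -
  obtain x r where p: "p = (x, r)" "x = a \<or> x = a + 1" "lo \<le> r" "r \<le> hi"
    using assms(1) by auto
  show ?thesis
  proof (cases "x = a + 1")
    case True
    then show ?thesis using strip_ham_path_from_outer_column[OF p(3,4)] that p(1) by metis
  next
    case False
    then have "lo < hi" "x = a" using assms(2) p by auto
    then show ?thesis using strip_ham_path_from_inner_column[OF p(3,4)] that p(1) by metis
  qed
qed

text \<open>For a strip containing both ends: the rest of the grid is to be inserted between the two
  paths.\<close>

definition strip_split :: "int \<Rightarrow> int \<Rightarrow> vtx \<Rightarrow> vtx \<Rightarrow> bool" where
  "strip_split a N s t \<longleftrightarrow> (\<exists>P1 P2 y1 y2. y1 \<noteq> y2 \<and>
     ham_path (set P1) s (a, y1) P1 \<and> ham_path (set P2) (a, y2) t P2 \<and>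
     set P1 \<inter> set P2 = {} \<and> set P1 \<union> set P2 = {a, a + 1} \<times> {1..N} \<and>
     (\<not> (N = 2 \<and> fst s = a + 1 \<and> fst t = a + 1) \<longrightarrow> column_edge (a + 1) P1 \<or> column_edge (a + 1) P2))"

lemma strip_splitI:
  assumes "ham_path A1 s (a, y1) P1" "ham_path A2 (a, y2) t P2" "y1 \<noteq> y2"
    "A1 \<inter> A2 = {}" "A1 \<union> A2 = {a, a + 1} \<times> {1..N}"
    "\<not> (N = 2 \<and> fst s = a + 1 \<and> fst t = a + 1) \<Longrightarrow> column_edge (a + 1) P1 \<or> column_edge (a + 1) P2"
  shows "strip_split a N s t"
proof -
  have "set P1 = A1" "set P2 = A2" using assms(1,2) by (simp_all add: ham_path_iff)
  then show ?thesis unfolding strip_split_def using assms by blast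
qed

lemma strip_split_commute:
  assumes "strip_split a N t s"
  shows "strip_split a N s t"
proof -
  obtain P1 P2 y1 y2 where P: "y1 \<noteq> y2" "ham_path (set P1) t (a, y1) P1" "ham_path (set P2) (a, y2) s P2"
    "set P1 \<inter> set P2 = {}" "set P1 \<union> set P2 = {a, a + 1} \<times> {1..N}"
    "\<not> (N = 2 \<and> fst t = a + 1 \<and> fst s = a + 1) \<longrightarrow> column_edge (a + 1) P1 \<or> column_edge (a + 1) P2"
    using assms unfolding strip_split_def by blast
  show ?thesis
    by (rule strip_splitI[OF ham_path_rev[OF P(3)] ham_path_rev[OF P(2)]]) (use P in auto)
qed

lemma strip_split_across:
  assumes "1 \<le> k" "k < N" "s \<in> {a, a + 1} \<times> {1..k}" "t \<in> {a, a + 1} \<times> {k + 1..N}"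
    "1 < k \<or> fst s = a + 1" "k + 1 < N \<or> fst t = a + 1"
    "k = 1 \<Longrightarrow> N = 2 \<Longrightarrow> fst s = a + 1 \<and> fst t = a + 1"
  shows "strip_split a N s t"
proof -
  obtain y1 P1 where P1: "1 \<le> y1" "y1 \<le> k" "ham_path ({a, a + 1} \<times> {1..k}) s (a, y1) P1"
    "1 < k \<Longrightarrow> column_edge (a + 1) P1"
    using strip_ham_path_to_inner_column[OF assms(3,5)] by metis
  obtain y2 P2 where P2: "k + 1 \<le> y2" "y2 \<le> N" "ham_path ({a, a + 1} \<times> {k + 1..N}) t (a, y2) P2"
    "k + 1 < N \<Longrightarrow> column_edge (a + 1) P2"
    using strip_ham_path_to_inner_column[OF assms(4,6)] by metis
  show ?thesis
  proof (rule strip_splitI[OF P1(3) ham_path_rev[OF P2(3)]])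
    show "{a, a + 1} \<times> {1..k} \<union> {a, a + 1} \<times> {k + 1..N} = {a, a + 1} \<times> {1..N}"
      using assms(1,2) by auto
    show "column_edge (a + 1) P1 \<or> column_edge (a + 1) (rev P2)"
      if "\<not> (N = 2 \<and> fst s = a + 1 \<and> fst t = a + 1)"
    proof -
      have "1 < k \<or> k + 1 < N" using assms(1,2,7) that by (cases "k = 1"; cases "N = 2") auto
      then show ?thesis using P1(4) P2(4) by auto
    qed
  qed (use P1 P2 in auto)
qed

lemma strip_split_same_row:
  assumes "2 \<le> N" "1 \<le> i" "i \<le> N"
  shows "strip_split a N (a, i) (a + 1, i)"
proof (cases "i = N")
  case True
  obtain y Q where Q: "1 \<le> y" "y \<le> N - 1" "ham_path ({a, a + 1} \<times> {1..N - 1}) (a + 1, N - 1) (a, y) Q"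
    by (rule strip_ham_path_from_outer_column[of 1 "N - 1" "N - 1" a])
      (use assms in auto)
  note P2 = ham_path_snoc_column_step[OF ham_path_rev[OF Q(3)], of N]
  show ?thesis
    unfolding True by (rule strip_splitI[OF ham_path_singleton P2(1)]) (use Q P2(2) in auto)
next
  case False
  obtain y2 Q where Q: "i + 1 \<le> y2" "y2 \<le> N" "ham_path ({a, a + 1} \<times> {i + 1..N}) (a + 1, i + 1) (a, y2) Q"
    by (rule strip_ham_path_from_outer_column[of "i + 1" "i + 1" N a])
      (use assms False in auto)
  note P2 = ham_path_snoc_column_step[OF ham_path_rev[OF Q(3)], of i]
  show ?thesis
  proof (cases "i = 1")
    case True
    show ?thesis
      by (rule strip_splitI[OF ham_path_singleton P2(1)]) (use Q P2(2) True assms in auto)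
  next
    case False
    obtain y1 Q' where Q': "1 \<le> y1" "y1 \<le> i - 1"
      "ham_path ({a, a + 1} \<times> {1..i - 1}) (a + 1, i - 1) (a, y1) Q'"
      by (rule strip_ham_path_from_outer_column[of 1 "i - 1" "i - 1" a])
        (use assms False in auto)
    have P1: "ham_path ({(a, i)} \<union> {a, a + 1} \<times> {1..i - 1}) (a, i) (a, y1) ([(a, i)] @ Q')"
      by (rule ham_path_append[OF ham_path_singleton Q'(3)]) (auto simp: sadj_def)
    show ?thesis
      by (rule strip_splitI[OF P1 P2(1)]) (use Q Q' P2(2) assms \<open>i \<noteq> N\<close> False in auto)
  qed
qed

lemma strip_split_bottom_corner:
  assumes "2 \<le> N" "t = (a, 2) \<or> t = (a + 1, 2)" "\<not> (N = 2 \<and> t = (a, 2))"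
  shows "strip_split a N (a, 1) t"
proof -
  define u :: vtx where "u = (if t = (a, 2) then (a + 1, 2) else (a, 2))"
  have T: "ham_path {(a, 2), (a + 1, 1), (a + 1, 2)} u t [u, (a + 1, 1), t]"
    using ham_path_of_list[of "[u, (a + 1, 1), t]"] assms(2)
    by (auto simp: u_def sadj_def insert_commute)
  have col: "column_edge (a + 1) [u, (a + 1, 1), t]"
    using assms(2) unfolding column_edge_def edge_in_path_iff by (auto simp: u_def)
  show ?thesis
  proof (cases "N = 2")
    case True
    then have "u = (a, 2)" using assms(2,3) by (auto simp: u_def)
    then have "ham_path {(a, 2), (a + 1, 1), (a + 1, 2)} (a, 2) t [u, (a + 1, 1), t]"
      using T by simp
    then show ?thesis
      by (rule strip_splitI[OF ham_path_singleton]) (use col True in auto)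
  next
    case False
    obtain y Q where Q: "3 \<le> y" "y \<le> N" "ham_path ({a, a + 1} \<times> {3..N}) (a + 1, 3) (a, y) Q"
      by (rule strip_ham_path_from_outer_column[of 3 3 N a])
        (use assms False in auto)
    have "ham_path ({a, a + 1} \<times> {3..N} \<union> {(a, 2), (a + 1, 1), (a + 1, 2)}) (a, y) t
        (rev Q @ [u, (a + 1, 1), t])"
      by (rule ham_path_append[OF ham_path_rev[OF Q(3)] T]) (auto simp: u_def sadj_def)
    then show ?thesis
      by (rule strip_splitI[OF ham_path_singleton]) (use Q col assms in \<open>auto intro: column_edge_appendI\<close>)
  qed
qed

lemma strip_split_top_corner:
  assumes "2 \<le> N" "s = (a, N - 1) \<or> s = (a + 1, N - 1)" "\<not> (N = 2 \<and> s = (a, 1))"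
  shows "strip_split a N s (a, N)"
proof -
  define u :: vtx where "u = (if s = (a, N - 1) then (a + 1, N - 1) else (a, N - 1))"
  have T: "ham_path {(a, N - 1), (a + 1, N), (a + 1, N - 1)} s u [s, (a + 1, N), u]"
    using ham_path_of_list[of "[s, (a + 1, N), u]"] assms(2)
    by (auto simp: u_def sadj_def insert_commute)
  have "edge_in_path (a + 1, N - 1) (a + 1, N - 1 + 1) [s, (a + 1, N), u]"
    using assms(2) unfolding edge_in_path_iff by (auto simp: u_def)
  then have col: "column_edge (a + 1) [s, (a + 1, N), u]"
    unfolding column_edge_def by blast
  show ?thesis
  proof (cases "N = 2")
    case True
    then have "u = (a, 1)" using assms(2,3) by (auto simp: u_def)
    then have "ham_path {(a, N - 1), (a + 1, N), (a + 1, N - 1)} s (a, 1) [s, (a + 1, N), u]"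
      using T True by simp
    then show ?thesis
      by (rule strip_splitI[OF _ ham_path_singleton]) (use col True in auto)
  next
    case False
    obtain y Q where Q: "1 \<le> y" "y \<le> N - 2" "ham_path ({a, a + 1} \<times> {1..N - 2}) (a + 1, N - 2) (a, y) Q"
      by (rule strip_ham_path_from_outer_column[of 1 "N - 2" "N - 2" a])
        (use assms False in auto)
    have "ham_path ({(a, N - 1), (a + 1, N), (a + 1, N - 1)} \<union> {a, a + 1} \<times> {1..N - 2}) s (a, y)
        ([s, (a + 1, N), u] @ Q)"
      by (rule ham_path_append[OF T Q(3)]) (auto simp: u_def sadj_def)
    then show ?thesis
      by (rule strip_splitI[OF _ ham_path_singleton]) (use Q column_edge_appendI(1)[OF col] assms in auto)
  qed
qed

lemma strip_split_three_rows: "strip_split a 3 (a, 1) (a, 3)"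
proof -
  have "ham_path {(a, 2), (a + 1, 1), (a + 1, 2), (a + 1, 3), (a, 3)} (a, 2) (a, 3)
      [(a, 2), (a + 1, 1), (a + 1, 2), (a + 1, 3), (a, 3)]"
    using ham_path_of_list[of "[(a, 2), (a + 1, 1), (a + 1, 2), (a + 1, 3), (a, 3)]"]
    by (simp add: sadj_def)
  moreover have "column_edge (a + 1) [(a, 2), (a + 1, 1), (a + 1, 2), (a + 1, 3), (a, 3)]"
    unfolding column_edge_def edge_in_path_iff by force
  ultimately show ?thesis
    by (intro strip_splitI[OF ham_path_singleton]) auto
qed

lemma strip_split_distinct_rows:
  assumes "s \<in> {a, a + 1} \<times> {1..N}" "t \<in> {a, a + 1} \<times> {1..N}" "snd s < snd t"
    "\<not> (N = 2 \<and> fst s = a \<and> fst t = a)"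
    "\<not> (s = (a, 1) \<and> snd t = 2)" "\<not> (t = (a, N) \<and> snd s = N - 1)" "\<not> (s = (a, 1) \<and> t = (a, N) \<and> N = 3)"
  shows "strip_split a N s t"
proof -
  obtain c i d j where s: "s = (c, i)" "c = a \<or> c = a + 1" "1 \<le> i" "i \<le> N"
    and t: "t = (d, j)" "d = a \<or> d = a + 1" "1 \<le> j" "j \<le> N"
    using assms(1,2) by auto
  consider "t \<noteq> (a, N)" | "t = (a, N)" "s \<noteq> (a, 1)" | "t = (a, N)" "s = (a, 1)" by blast
  then show ?thesis
  proof cases
    case 1
    show ?thesis
      by (rule strip_split_across[of "j - 1"]) (use s t assms(3-5) 1 in auto)
  next
    case 2
    show ?thesis
      by (rule strip_split_across[of i]) (use s t assms(3,6) 2 in auto)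
  next
    case 3
    then have "4 \<le> N" using assms(3,4,7) s t by auto
    then show ?thesis
      by (intro strip_split_across[of 2]) (use s t 3 in auto)
  qed
qed

lemma strip_split_ordered:
  assumes "2 \<le> N" "s \<in> {a, a + 1} \<times> {1..N}" "t \<in> {a, a + 1} \<times> {1..N}" "s \<noteq> t"
    "\<not> (N = 2 \<and> fst s = a \<and> fst t = a)" "snd s < snd t \<or> (snd s = snd t \<and> fst s = a)"
  shows "strip_split a N s t"
proof -
  consider (same_row) "snd s = snd t"
    | (bottom) "s = (a, 1)" "snd t = 2"
    | (top) "t = (a, N)" "snd s = N - 1"
    | (three) "s = (a, 1)" "t = (a, N)" "N = 3"
    | (distinct_rows) "snd s < snd t" "\<not> (s = (a, 1) \<and> snd t = 2)" "\<not> (t = (a, N) \<and> snd s = N - 1)"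
        "\<not> (s = (a, 1) \<and> t = (a, N) \<and> N = 3)"
    using assms(6) by fastforce
  then show ?thesis
  proof cases
    case same_row
    then have "s = (a, snd s)" "t = (a + 1, snd s)" "1 \<le> snd s" "snd s \<le> N"
      using assms(2-4,6) by auto
    then show ?thesis using strip_split_same_row[OF assms(1)] by metis
  next
    case bottom
    then show ?thesis using strip_split_bottom_corner[OF assms(1)] assms(3,5) by auto
  next
    case top
    then show ?thesis using strip_split_top_corner[OF assms(1)] assms(2,5) by auto
  next
    case three
    then show ?thesis using strip_split_three_rows by simp
  next
    case distinct_rows
    then show ?thesis using strip_split_distinct_rows[OF assms(2,3)] assms(5) by blast
  qed
qed

lemma strip_split_of_mem:
  assumes "2 \<le> N" "s \<in> {a, a + 1} \<times> {1..N}" "t \<in> {a, a + 1} \<times> {1..N}" "s \<noteq> t"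
    "\<not> (N = 2 \<and> fst s = a \<and> fst t = a)"
  shows "strip_split a N s t"
proof (cases "snd s < snd t \<or> (snd s = snd t \<and> fst s = a)")
  case True
  then show ?thesis using strip_split_ordered[OF assms] by simp
next
  case False
  then have "snd t < snd s \<or> (snd t = snd s \<and> fst t = a)"
    using assms(2-4) by auto
  then have "strip_split a N t s"
    using strip_split_ordered[OF assms(1,3,2) assms(4)[symmetric]] assms(5) by auto
  then show ?thesis by (rule strip_split_commute)
qed

section \<open>The induction step\<close>

lemma neighbour_avoiding:
  fixes y n z :: int
  assumes "1 \<le> y" "y \<le> n" "2 \<le> n"
  obtains y' where "1 \<le> y'" "y' \<le> n" "\<bar>y' - y\<bar> \<le> 1" "y' \<noteq> z"
proof (cases "y = z")
  case False
  then show ?thesis using that[of y] assms by simp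
next
  case True
  show ?thesis
  proof (cases "1 < y")
    case True
    then show ?thesis using that[of "y - 1"] assms \<open>y = z\<close> by simp
  next
    case False
    then show ?thesis using that[of "y + 1"] assms \<open>y = z\<close> by simp
  qed
qed

definition separating_pair :: "int \<Rightarrow> int \<Rightarrow> vtx \<Rightarrow> vtx \<Rightarrow> bool" where
  "separating_pair m n s t \<longleftrightarrow> n = 2 \<and> fst s = fst t \<and> 2 \<le> fst s \<and> fst s \<le> m - 1"

lemma is_path_in_crosses_column:
  assumes "is_path_in V p" "fst (hd p) \<le> c" "c \<le> fst (last p)"
  shows "\<exists>v\<in>set p. fst v = c"
  using assms
proof (induction p rule: induct_list012)
  case (3 x y p)
  show ?case
  proof (cases "fst x = c")
    case False
    have "sadj x y" using "3.prems"(1) by (simp add: is_path_in_iff)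
    then have "fst y \<le> c" using False "3.prems"(2) by (auto simp: sadj_def)
    moreover have "is_path_in V (y # p)" using "3.prems"(1) by (simp add: is_path_in_iff)
    ultimately show ?thesis using "3.IH"(2) "3.prems"(3) by auto
  qed simp
qed (auto simp: is_path_in_iff)

lemma separating_pair_vertex_cut:
  assumes "separating_pair m n s t" "s \<in> R m n" "t \<in> R m n" "s \<noteq> t"
  shows "vertex_cut (R m n) {s, t}"
proof -
  have cut: "n = 2" "fst t = fst s" "2 \<le> fst s" "fst s \<le> m - 1"
    using assms(1) by (auto simp: separating_pair_def)
  have column: "v = s \<or> v = t" if "v \<in> R m n" "fst v = fst s" for v
    using that assms(2-4) cut by (cases v, cases s, cases t) (auto simp: R_def)
  have "\<not> connected_on (R m n - {s, t})"
  proof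
    assume "connected_on (R m n - {s, t})"
    moreover have "(1, 1) \<in> R m n - {s, t}" "(m, 1) \<in> R m n - {s, t}"
      using cut by (auto simp: R_def)
    ultimately obtain p where p: "is_path_in (R m n - {s, t}) p" "hd p = (1, 1)" "last p = (m, 1)"
      unfolding connected_on_def by blast
    have "\<exists>v\<in>set p. fst v = fst s"
      using is_path_in_crosses_column[OF p(1)] p(2,3) cut by simp
    then obtain v where v: "v \<in> set p" "fst v = fst s" by blast
    then have "v \<in> R m n - {s, t}" using p(1) by (auto simp: is_path_in_iff)
    then show False using column[of v] v(2) by blast
  qed
  then show ?thesis using assms(2,3) by (simp add: vertex_cut_def)
qed

definition forbidden_pair :: "int \<Rightarrow> vtx \<Rightarrow> vtx \<Rightarrow> bool" where
  "forbidden_pair n s t \<longleftrightarrow>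
     (n = 2 \<and> (s, t) \<in> {((1, 1), (2, 1)), ((2, 1), (1, 1)), ((1, 1), (2, 2)), ((2, 2), (1, 1)),
                         ((2, 1), (1, 2)), ((1, 2), (2, 1))}) \<or>
     (n \<ge> 3 \<and> (s, t) \<in> {((1, 1), (2, 1)), ((2, 1), (1, 1))})"

definition admissible :: "int \<Rightarrow> int \<Rightarrow> vtx \<Rightarrow> vtx \<Rightarrow> bool" where
  "admissible m n s t \<longleftrightarrow>
     s \<in> R m n \<and> t \<in> R m n \<and> s \<noteq> t \<and> \<not> separating_pair m n s t \<and> \<not> forbidden_pair n s t"

lemma forbidden_pairD:
  "forbidden_pair n s t \<Longrightarrow>
     (n = 2 \<and> {s, t} \<in> {{(1, 1), (2, 1)}, {(1, 1), (2, 2)}, {(2, 1), (1, 2)}}) \<or>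
     (n \<ge> 3 \<and> {s, t} = {(1, 1), (2, 1)})"
  unfolding forbidden_pair_def by (auto simp: insert_commute)

lemma forbidden_pair_corner: "forbidden_pair n s t \<Longrightarrow> s \<in> {1, 2} \<times> {1, 2}"
  unfolding forbidden_pair_def by auto

lemma forbidden_pair_commute: "forbidden_pair n s t \<longleftrightarrow> forbidden_pair n t s"
  unfolding forbidden_pair_def by auto

lemma forbidden_pair_cong: "3 \<le> n \<Longrightarrow> 3 \<le> n' \<Longrightarrow> forbidden_pair n s t \<longleftrightarrow> forbidden_pair n' s t"
  unfolding forbidden_pair_def by auto

lemma admissible_commute: "admissible m n s t \<Longrightarrow> admissible m n t s"
  using forbidden_pair_commute[of n s t] unfolding admissible_def separating_pair_def by auto

text \<open>The last two conjuncts mark where the induction step can splice in two further columns,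
  respectively two further rows.\<close>

definition good_path :: "int \<Rightarrow> int \<Rightarrow> vtx \<Rightarrow> vtx \<Rightarrow> vtx list \<Rightarrow> bool" where
  "good_path m n s t Q \<longleftrightarrow> ham_path (R m n) s t Q \<and> edge_in_path (1, 1) (2, 1) Q \<and>
     (\<not> (n = 2 \<and> fst s = m \<and> fst t = m) \<longrightarrow> column_edge m Q) \<and> (m \<le> 4 \<and> 4 \<le> n \<longrightarrow> row_edge n Q)"

lemma good_pathI:
  assumes "ham_path (R m n) s t Q" "edge_in_path (1, 1) (2, 1) Q"
    "\<not> (n = 2 \<and> fst s = m \<and> fst t = m) \<Longrightarrow> column_edge m Q" "m \<le> 4 \<Longrightarrow> 4 \<le> n \<Longrightarrow> row_edge n Q"
  shows "good_path m n s t Q"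
  using assms unfolding good_path_def by blast

lemma good_path_rev: "good_path m n s t Q \<Longrightarrow> good_path m n t s (rev Q)"
  unfolding good_path_def by (auto dest: ham_path_rev)

lemma R_split_columns:
  assumes "2 \<le> m"
  shows "R (m - 2) n \<union> {m - 1, m} \<times> {1..n} = R m n" "R (m - 2) n \<inter> {m - 1, m} \<times> {1..n} = {}"
  using assms by (auto simp: R_def)

lemma good_path_add_columns_outside:
  assumes "5 \<le> m" and IH: "\<And>s t. admissible (m - 2) n s t \<Longrightarrow> \<exists>Q. good_path (m - 2) n s t Q"
    and st: "admissible m n s t" "fst s \<le> m - 2" "fst t \<le> m - 2"
  shows "\<exists>L. good_path m n s t L"
proof -
  have "admissible (m - 2) n s t"
    using st by (auto simp: admissible_def separating_pair_def R_def)
  then obtain Q where Q: "good_path (m - 2) n s t Q" using IH by blast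
  have "\<not> (n = 2 \<and> fst s = m - 2 \<and> fst t = m - 2)"
    using st assms(1) by (auto simp: admissible_def separating_pair_def)
  then obtain y where y: "edge_in_path (m - 2, y) (m - 2, y + 1) Q"
    using Q by (auto simp: good_path_def column_edge_def)
  have "(m - 2, y) \<in> R (m - 2) n" "(m - 2, y + 1) \<in> R (m - 2) n"
    using edge_in_path_set[OF y] Q by (auto simp: good_path_def ham_path_iff)
  then have "1 \<le> y" "y < n" by (auto simp: R_def)
  then have U: "ham_path ({m - 1, m} \<times> {1..n}) (m - 1, y) (m - 1, y + 1) (u_turn (m - 1) 1 n y)"
    using ham_path_u_turn[of 1 y n "m - 1"] by simp
  have HQ: "ham_path (R (m - 2) n) s t Q" using Q by (simp add: good_path_def)
  obtain L where L: "ham_path (R (m - 2) n \<union> {m - 1, m} \<times> {1..n}) s t L"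
    "\<And>u v. edge_in_path u v Q \<Longrightarrow> {u, v} \<noteq> {(m - 2, y), (m - 2, y + 1)} \<Longrightarrow> edge_in_path u v L"
    "\<And>u v. edge_in_path u v (u_turn (m - 1) 1 n y) \<Longrightarrow> edge_in_path u v L"
    by (rule ham_path_detour[OF HQ y U]) (use R_split_columns(2)[of m n] assms(1) in \<open>auto simp: sadj_def\<close>)
  show ?thesis
  proof (intro exI good_pathI)
    show "ham_path (R m n) s t L" using L(1) R_split_columns(1)[of m n] assms(1) by simp
    show "edge_in_path (1, 1) (2, 1) L"
      using L(2) Q assms(1) by (auto simp: good_path_def doubleton_eq_iff)
    have "column_edge m (u_turn (m - 1) 1 n y)"
      using column_edge_u_turn[of 1 n "m - 1" y] \<open>1 \<le> y\<close> \<open>y < n\<close> by simp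
    then show "column_edge m L"
      using L(3) unfolding column_edge_def by blast
  qed (use assms(1) in auto)
qed

lemma good_path_add_columns_one_end:
  assumes "5 \<le> m" "2 \<le> n" and IH: "\<And>s t. admissible (m - 2) n s t \<Longrightarrow> \<exists>Q. good_path (m - 2) n s t Q"
    and st: "admissible m n s t" "m - 1 \<le> fst s" "fst t \<le> m - 2"
  shows "\<exists>L. good_path m n s t L"
proof -
  have "s \<in> {m - 1, m - 1 + 1} \<times> {1..n}" using st by (auto simp: admissible_def R_def)
  then obtain y P where P: "1 \<le> y" "y \<le> n" "ham_path ({m - 1, m} \<times> {1..n}) s (m - 1, y) P"
    "column_edge m P"
    by (rule strip_ham_path_to_inner_column) (use assms(2) in auto)
  obtain y' where y': "1 \<le> y'" "y' \<le> n" "\<bar>y' - y\<bar> \<le> 1" "y' \<noteq> snd t"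
    using neighbour_avoiding[OF P(1,2) assms(2)] by blast
  have "admissible (m - 2) n (m - 2, y') t"
    using st y' assms(1) forbidden_pair_corner[of n "(m - 2, y')" t]
    by (auto simp: admissible_def separating_pair_def R_def)
  then obtain Q where Q: "good_path (m - 2) n (m - 2, y') t Q" using IH by blast
  have "ham_path ({m - 1, m} \<times> {1..n} \<union> R (m - 2) n) s t (P @ Q)"
    by (rule ham_path_append[OF P(3)]) (use Q y' in \<open>auto simp: good_path_def R_def sadj_def\<close>)
  then have "ham_path (R m n) s t (P @ Q)"
    using R_split_columns[of m n] assms(1) by (simp add: Un_commute)
  moreover have "edge_in_path (1, 1) (2, 1) (P @ Q)"
    using Q by (intro edge_in_path_appendI(2)) (simp add: good_path_def)
  ultimately show ?thesis
    using column_edge_appendI(1)[OF P(4)] assms(1) by (intro exI good_pathI) auto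
qed

lemma good_path_add_columns_both_ends:
  assumes "5 \<le> m" "2 \<le> n" and IH: "\<And>s t. admissible (m - 2) n s t \<Longrightarrow> \<exists>Q. good_path (m - 2) n s t Q"
    and st: "admissible m n s t" "m - 1 \<le> fst s" "m - 1 \<le> fst t"
  shows "\<exists>L. good_path m n s t L"
proof -
  have "strip_split (m - 1) n s t"
    using st assms(1,2) by (intro strip_split_of_mem) (auto simp: admissible_def separating_pair_def R_def)
  then obtain P1 P2 y1 y2 where P: "y1 \<noteq> y2" "ham_path (set P1) s (m - 1, y1) P1"
    "ham_path (set P2) (m - 1, y2) t P2" "set P1 \<inter> set P2 = {}" "set P1 \<union> set P2 = {m - 1, m} \<times> {1..n}"
    "\<not> (n = 2 \<and> fst s = m \<and> fst t = m) \<longrightarrow> column_edge m P1 \<or> column_edge m P2"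
    unfolding strip_split_def by auto
  have "(m - 1, y1) \<in> set P1" "(m - 1, y2) \<in> set P2" using P(2,3) ham_path_endpoints by blast+
  then have "y1 \<in> {1..n}" "y2 \<in> {1..n}" using P(5) by blast+
  then have "admissible (m - 2) n (m - 2, y1) (m - 2, y2)"
    using P(1) assms(1) forbidden_pair_corner[of n "(m - 2, y1)"]
    by (auto simp: admissible_def separating_pair_def R_def)
  then obtain Q where Q: "good_path (m - 2) n (m - 2, y1) (m - 2, y2) Q" using IH by blast
  have "ham_path (set P1 \<union> R (m - 2) n \<union> set P2) s t (P1 @ Q @ P2)"
    by (rule ham_path_append3[OF P(2) _ P(3)])
      (use Q P(4,5) R_split_columns(2)[of m n] assms(1) in \<open>auto simp: good_path_def sadj_def\<close>)
  moreover have "set P1 \<union> R (m - 2) n \<union> set P2 = R m n"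
    using P(5) R_split_columns(1)[of m n] assms(1) by auto
  moreover have "edge_in_path (1, 1) (2, 1) (P1 @ Q @ P2)"
    using Q by (intro edge_in_path_appendI) (simp add: good_path_def)
  moreover have "\<not> (n = 2 \<and> fst s = m \<and> fst t = m) \<Longrightarrow> column_edge m (P1 @ Q @ P2)"
    using P(6) column_edge_appendI by blast
  ultimately show ?thesis
    using assms(1) by (intro exI good_pathI) auto
qed

lemma good_path_add_columns:
  assumes "5 \<le> m" "2 \<le> n" and IH: "\<And>s t. admissible (m - 2) n s t \<Longrightarrow> \<exists>Q. good_path (m - 2) n s t Q"
    and st: "admissible m n s t"
  shows "\<exists>L. good_path m n s t L"
proof -
  consider "fst s \<le> m - 2" "fst t \<le> m - 2" | "m - 1 \<le> fst s" "fst t \<le> m - 2"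
    | "fst s \<le> m - 2" "m - 1 \<le> fst t" | "m - 1 \<le> fst s" "m - 1 \<le> fst t" by linarith
  then show ?thesis
  proof cases
    case 1
    then show ?thesis using good_path_add_columns_outside[OF assms(1) IH st] by blast
  next
    case 2
    then show ?thesis using good_path_add_columns_one_end[OF assms(1,2) IH st] by blast
  next
    case 3
    then obtain L where "good_path m n t s L"
      using good_path_add_columns_one_end[OF assms(1,2) IH admissible_commute[OF st]] by blast
    then show ?thesis using good_path_rev by blast
  next
    case 4
    then show ?thesis using good_path_add_columns_both_ends[OF assms(1,2) IH st] by blast
  qed
qed

lemma R_split_rows:
  assumes "2 \<le> n"
  shows "R m (n - 2) \<union> {1..m} \<times> {n - 1, n} = R m n" "R m (n - 2) \<inter> {1..m} \<times> {n - 1, n} = {}"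
  using assms by (auto simp: R_def)

lemma good_path_add_rows_outside:
  assumes "m \<le> 4" "6 \<le> n" and IH: "\<And>s t. admissible m (n - 2) s t \<Longrightarrow> \<exists>Q. good_path m (n - 2) s t Q"
    and st: "admissible m n s t" "snd s \<le> n - 2" "snd t \<le> n - 2"
  shows "\<exists>L. good_path m n s t L"
proof -
  have "admissible m (n - 2) s t"
    using st assms(2) forbidden_pair_cong[of n "n - 2" s t]
    by (auto simp: admissible_def separating_pair_def R_def)
  then obtain Q where Q: "good_path m (n - 2) s t Q" using IH by blast
  have HQ: "ham_path (R m (n - 2)) s t Q" and "row_edge (n - 2) Q" and col: "column_edge m Q"
    using Q assms(1,2) by (auto simp: good_path_def)
  then obtain x where x: "edge_in_path (x, n - 2) (x + 1, n - 2) Q"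
    by (auto simp: row_edge_def)
  have "(x, n - 2) \<in> R m (n - 2)" "(x + 1, n - 2) \<in> R m (n - 2)"
    using edge_in_path_set[OF x] HQ by (auto simp: ham_path_iff)
  then have "1 \<le> x" "x < m" by (auto simp: R_def)
  then have U: "ham_path ({1..m} \<times> {n - 1, n}) (x, n - 1) (x + 1, n - 1) (map prod.swap (u_turn (n - 1) 1 m x))"
    using ham_path_swap[OF ham_path_u_turn[of 1 x m "n - 1"]] by (simp add: product_swap)
  obtain L where L: "ham_path (R m (n - 2) \<union> {1..m} \<times> {n - 1, n}) s t L"
    "\<And>u v. edge_in_path u v Q \<Longrightarrow> {u, v} \<noteq> {(x, n - 2), (x + 1, n - 2)} \<Longrightarrow> edge_in_path u v L"
    "\<And>u v. edge_in_path u v (map prod.swap (u_turn (n - 1) 1 m x)) \<Longrightarrow> edge_in_path u v L"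
    by (rule ham_path_detour[OF HQ x U]) (use R_split_rows(2)[of n m] assms(2) in \<open>auto simp: sadj_def\<close>)
  show ?thesis
  proof (intro exI good_pathI)
    show "ham_path (R m n) s t L" using L(1) R_split_rows(1)[of n m] assms(2) by simp
    show "edge_in_path (1, 1) (2, 1) L"
      using L(2) Q assms(2) by (auto simp: good_path_def doubleton_eq_iff)
    have "edge_in_path (m, y) (m, y + 1) L" if "edge_in_path (m, y) (m, y + 1) Q" for y
      using L(2)[OF that] by (auto simp: doubleton_eq_iff)
    then show "column_edge m L" using col unfolding column_edge_def by blast
    have "row_edge n (map prod.swap (u_turn (n - 1) 1 m x))"
      using row_edge_map_swap[OF column_edge_u_turn[of 1 m "n - 1" x]] \<open>1 \<le> x\<close> \<open>x < m\<close> by simp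
    then show "row_edge n L"
      using L(3) unfolding row_edge_def by blast
  qed
qed

lemma good_path_add_rows_one_end:
  assumes "3 \<le> m" "m \<le> 4" "6 \<le> n"
    and IH: "\<And>s t. admissible m (n - 2) s t \<Longrightarrow> \<exists>Q. good_path m (n - 2) s t Q"
    and st: "admissible m n s t" "n - 1 \<le> snd s" "snd t \<le> n - 2"
  shows "\<exists>L. good_path m n s t L"
proof -
  have "prod.swap s \<in> {n - 1, n - 1 + 1} \<times> {1..m}" using st by (auto simp: admissible_def R_def)
  then obtain x P where P: "1 \<le> x" "x \<le> m" "ham_path ({n - 1, n} \<times> {1..m}) (prod.swap s) (n - 1, x) P"
    "column_edge n P"
    by (rule strip_ham_path_to_inner_column) (use assms(1) in auto)
  have P': "ham_path ({1..m} \<times> {n - 1, n}) s (x, n - 1) (map prod.swap P)"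
    using ham_path_swap[OF P(3)] by (simp add: product_swap)
  have "2 \<le> m" using assms(1) by simp
  then obtain x' where x': "1 \<le> x'" "x' \<le> m" "\<bar>x' - x\<bar> \<le> 1" "x' \<noteq> fst t"
    using neighbour_avoiding[OF P(1,2)] by blast
  have "admissible m (n - 2) (x', n - 2) t"
    using st x' assms(3) forbidden_pair_corner[of "n - 2" "(x', n - 2)" t]
    by (auto simp: admissible_def separating_pair_def R_def)
  then obtain Q where Q: "good_path m (n - 2) (x', n - 2) t Q" using IH by blast
  then have HQ: "ham_path (R m (n - 2)) (x', n - 2) t Q"
    and Q_edges: "edge_in_path (1, 1) (2, 1) Q" "column_edge m Q"
    using assms(3) by (auto simp: good_path_def)
  have "ham_path ({1..m} \<times> {n - 1, n} \<union> R m (n - 2)) s t (map prod.swap P @ Q)"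
    by (rule ham_path_append[OF P' HQ]) (use x' R_split_rows(2)[of n m] assms(3) in \<open>auto simp: sadj_def\<close>)
  then have "ham_path (R m n) s t (map prod.swap P @ Q)"
    using R_split_rows[of n m] assms(3) by (simp add: Un_commute)
  moreover have "edge_in_path (1, 1) (2, 1) (map prod.swap P @ Q)" "column_edge m (map prod.swap P @ Q)"
    using Q_edges by (auto intro: edge_in_path_appendI(2) column_edge_appendI(2))
  moreover have "row_edge n (map prod.swap P @ Q)"
    using row_edge_map_swap[OF P(4)] by (rule row_edge_appendI(1))
  ultimately show ?thesis by (intro exI good_pathI)
qed

lemma good_path_add_rows_both_ends:
  assumes "3 \<le> m" "m \<le> 4" "6 \<le> n"
    and IH: "\<And>s t. admissible m (n - 2) s t \<Longrightarrow> \<exists>Q. good_path m (n - 2) s t Q"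
    and st: "admissible m n s t" "n - 1 \<le> snd s" "n - 1 \<le> snd t"
  shows "\<exists>L. good_path m n s t L"
proof -
  have "strip_split (n - 1) m (prod.swap s) (prod.swap t)"
    using st assms(1) by (intro strip_split_of_mem) (auto simp: admissible_def R_def)
  then obtain P1 P2 x1 x2 where P: "x1 \<noteq> x2" "ham_path (set P1) (prod.swap s) (n - 1, x1) P1"
    "ham_path (set P2) (n - 1, x2) (prod.swap t) P2" "set P1 \<inter> set P2 = {}"
    "set P1 \<union> set P2 = {n - 1, n} \<times> {1..m}" "column_edge n P1 \<or> column_edge n P2"
    using assms(1) unfolding strip_split_def by auto
  have "(n - 1, x1) \<in> set P1" "(n - 1, x2) \<in> set P2" using P(2,3) ham_path_endpoints by blast+
  then have "x1 \<in> {1..m}" "x2 \<in> {1..m}" using P(5) by blast+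
  then have "admissible m (n - 2) (x1, n - 2) (x2, n - 2)"
    using P(1) assms(3) forbidden_pair_corner[of "n - 2" "(x1, n - 2)"]
    by (auto simp: admissible_def separating_pair_def R_def)
  then obtain Q where Q: "good_path m (n - 2) (x1, n - 2) (x2, n - 2) Q" using IH by blast
  then have HQ: "ham_path (R m (n - 2)) (x1, n - 2) (x2, n - 2) Q"
    and Q_edges: "edge_in_path (1, 1) (2, 1) Q" "column_edge m Q"
    using assms(3) by (auto simp: good_path_def)
  let ?A1 = "prod.swap ` set P1" and ?A2 = "prod.swap ` set P2"
  have H1: "ham_path ?A1 s (x1, n - 1) (map prod.swap P1)" using ham_path_swap[OF P(2)] by simp
  have H2: "ham_path ?A2 (x2, n - 1) t (map prod.swap P2)" using ham_path_swap[OF P(3)] by simp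
  have A: "?A1 \<union> ?A2 = {1..m} \<times> {n - 1, n}"
    using P(5) by (metis image_Un product_swap)
  have D: "?A1 \<inter> ?A2 = {}" "?A1 \<inter> R m (n - 2) = {}" "R m (n - 2) \<inter> ?A2 = {}"
    using P(4) A R_split_rows(2)[of n m] assms(3) by auto
  have "ham_path (?A1 \<union> R m (n - 2) \<union> ?A2) s t (map prod.swap P1 @ Q @ map prod.swap P2)"
    by (rule ham_path_append3[OF H1 HQ H2 _ _ _]) (use D in \<open>auto simp: sadj_def\<close>)
  moreover have "?A1 \<union> R m (n - 2) \<union> ?A2 = R m n"
    using A R_split_rows(1)[of n m] assms(3) by auto
  moreover have "edge_in_path (1, 1) (2, 1) (map prod.swap P1 @ Q @ map prod.swap P2)"
    "column_edge m (map prod.swap P1 @ Q @ map prod.swap P2)"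
    using Q_edges by (auto intro: edge_in_path_appendI column_edge_appendI)
  moreover have "row_edge n (map prod.swap P1 @ Q @ map prod.swap P2)"
    using P(6) row_edge_map_swap row_edge_appendI by blast
  ultimately show ?thesis by (intro exI good_pathI) auto
qed

lemma good_path_add_rows:
  assumes "3 \<le> m" "m \<le> 4" "6 \<le> n"
    and IH: "\<And>s t. admissible m (n - 2) s t \<Longrightarrow> \<exists>Q. good_path m (n - 2) s t Q"
    and st: "admissible m n s t"
  shows "\<exists>L. good_path m n s t L"
proof -
  consider "snd s \<le> n - 2" "snd t \<le> n - 2" | "n - 1 \<le> snd s" "snd t \<le> n - 2"
    | "snd s \<le> n - 2" "n - 1 \<le> snd t" | "n - 1 \<le> snd s" "n - 1 \<le> snd t" by linarith
  then show ?thesis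
  proof cases
    case 1
    then show ?thesis using good_path_add_rows_outside[OF assms(2,3) IH st] by blast
  next
    case 2
    then show ?thesis using good_path_add_rows_one_end[OF assms(1-3) IH st] by blast
  next
    case 3
    then obtain L where "good_path m n t s L"
      using good_path_add_rows_one_end[OF assms(1-3) IH admissible_commute[OF st]] by blast
    then show ?thesis using good_path_rev by blast
  next
    case 4
    then show ?thesis using good_path_add_rows_both_ends[OF assms(1-3) IH st] by blast
  qed
qed

section \<open>Base cases\<close>

definition grid :: "int \<Rightarrow> int \<Rightarrow> vtx list" where
  "grid m n = List.product [1..m] [1..n]"

lemma set_grid: "set (grid m n) = R m n"
  by (auto simp: grid_def R_def)

fun list_pairs :: "'a list \<Rightarrow> ('a \<times> 'a) list" where
  "list_pairs [] = []"
| "list_pairs (x # xs) = map (Pair x) xs @ list_pairs xs"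

lemma list_pairs_complete:
  "x \<in> set xs \<Longrightarrow> y \<in> set xs \<Longrightarrow> x \<noteq> y \<Longrightarrow> (x, y) \<in> set (list_pairs xs) \<or> (y, x) \<in> set (list_pairs xs)"
  by (induction xs) auto

definition admissible_pairs :: "int \<Rightarrow> int \<Rightarrow> (vtx \<times> vtx) list" where
  "admissible_pairs m n =
     filter (\<lambda>(s, t). \<not> separating_pair m n s t \<and> \<not> forbidden_pair n s t) (list_pairs (grid m n))"

definition good_witness :: "int \<Rightarrow> int \<Rightarrow> vtx \<Rightarrow> vtx \<Rightarrow> vtx list \<Rightarrow> bool" where
  "good_witness m n s t q \<longleftrightarrow> q \<noteq> [] \<and> hd q = s \<and> last q = t \<and> distinct q \<and> set q = set (grid m n) \<and>
     (\<forall>(u, v)\<in>path_edges q. sadj u v) \<and>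
     (((1, 1), (2, 1)) \<in> path_edges q \<or> ((2, 1), (1, 1)) \<in> path_edges q) \<and>
     (\<not> (n = 2 \<and> fst s = m \<and> fst t = m) \<longrightarrow> (\<exists>(u, v)\<in>path_edges q. fst u = m \<and> fst v = m)) \<and>
     (m \<le> 4 \<and> 4 \<le> n \<longrightarrow> (\<exists>(u, v)\<in>path_edges q. snd u = n \<and> snd v = n))"

lemma good_path_of_witness:
  assumes "good_witness m n s t q"
  shows "good_path m n s t q"
proof -
  have q: "q \<noteq> []" "hd q = s" "last q = t" "distinct q" "set q = R m n" "\<forall>(u, v)\<in>path_edges q. sadj u v"
    using assms by (auto simp: good_witness_def set_grid)
  have edge: "edge_in_path u v q" "sadj u v" if "(u, v) \<in> path_edges q" for u v
    using that q(6) by (auto simp: edge_in_path_iff)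
  show ?thesis
  proof (rule good_pathI)
    show "ham_path (R m n) s t q" using q by (simp add: ham_path_iff)
    show "edge_in_path (1, 1) (2, 1) q" using assms by (simp add: good_witness_def edge_in_path_iff)
    show "column_edge m q" if "\<not> (n = 2 \<and> fst s = m \<and> fst t = m)"
    proof -
      have "\<exists>(u, v)\<in>path_edges q. fst u = m \<and> fst v = m"
        using assms that by (simp add: good_witness_def)
      then obtain u v where uv: "(u, v) \<in> path_edges q" "fst u = m" "fst v = m" by blast
      have "column_edge (fst u) q" by (rule column_edgeI[OF edge[OF uv(1)]]) (simp add: uv)
      then show ?thesis using uv by simp
    qed
    show "row_edge n q" if "m \<le> 4" "4 \<le> n"
    proof -
      have "\<exists>(u, v)\<in>path_edges q. snd u = n \<and> snd v = n"
        using assms that by (simp add: good_witness_def)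
      then obtain u v where uv: "(u, v) \<in> path_edges q" "snd u = n" "snd v = n" by blast
      have "row_edge (snd u) q" by (rule row_edgeI[OF edge[OF uv(1)]]) (simp add: uv)
      then show ?thesis using uv by simp
    qed
  qed
qed

lemma good_path_of_table:
  assumes "list_all2 (\<lambda>(s, t). good_witness m n s t) (admissible_pairs m n) W" "admissible m n s t"
  shows "\<exists>Q. good_path m n s t Q"
proof -
  have found: "\<exists>Q. good_path m n s t Q" if st: "(s, t) \<in> set (admissible_pairs m n)" for s t
  proof -
    obtain i where "i < length (admissible_pairs m n)" "admissible_pairs m n ! i = (s, t)"
      using st unfolding in_set_conv_nth by blast
    then have "good_witness m n s t (W ! i)"
      using list_all2_nthD[OF assms(1)] by fastforce
    then show ?thesis using good_path_of_witness by blast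
  qed
  have "s \<in> set (grid m n)" "t \<in> set (grid m n)" "s \<noteq> t"
    using assms(2) by (auto simp: admissible_def set_grid)
  then consider "(s, t) \<in> set (list_pairs (grid m n))" | "(t, s) \<in> set (list_pairs (grid m n))"
    using list_pairs_complete[of s "grid m n" t] by blast
  then show ?thesis
  proof cases
    case 1
    then have "(s, t) \<in> set (admissible_pairs m n)"
      using assms(2) unfolding admissible_pairs_def admissible_def by simp
    then show ?thesis by (rule found)
  next
    case 2
    then have "(t, s) \<in> set (admissible_pairs m n)"
      using admissible_commute[OF assms(2)] unfolding admissible_pairs_def admissible_def by simp
    then show ?thesis using found good_path_rev by blast
  qed
qed

definition witnesses_3_2 :: "vtx list list" where
  "witnesses_3_2 = [[(1,1),(2,1),(3,1),(3,2),(2,2),(1,2)],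
    [(1,1),(2,1),(1,2),(2,2),(3,2),(3,1)],
    [(1,1),(2,1),(1,2),(2,2),(3,1),(3,2)],
    [(1,2),(1,1),(2,1),(3,1),(3,2),(2,2)],
    [(1,2),(1,1),(2,1),(2,2),(3,2),(3,1)],
    [(1,2),(1,1),(2,1),(2,2),(3,1),(3,2)],
    [(2,1),(1,1),(1,2),(2,2),(3,2),(3,1)],
    [(2,1),(1,1),(1,2),(2,2),(3,1),(3,2)],
    [(2,2),(1,2),(1,1),(2,1),(3,2),(3,1)],
    [(2,2),(1,2),(1,1),(2,1),(3,1),(3,2)],
    [(3,1),(2,1),(1,1),(1,2),(2,2),(3,2)]]"

lemma witnesses_3_2_good: "list_all2 (\<lambda>(s, t). good_witness 3 2 s t) (admissible_pairs 3 2) witnesses_3_2"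
  by code_simp

definition witnesses_3_3 :: "vtx list list" where
  "witnesses_3_3 = [[(1,1),(2,1),(3,1),(3,2),(3,3),(2,2),(1,3),(2,3),(1,2)],
    [(1,1),(2,1),(3,1),(3,2),(3,3),(2,2),(1,2),(2,3),(1,3)],
    [(1,1),(2,1),(3,1),(3,2),(3,3),(2,3),(1,2),(1,3),(2,2)],
    [(1,1),(2,1),(3,1),(3,2),(3,3),(2,2),(1,2),(1,3),(2,3)],
    [(1,1),(2,1),(1,2),(1,3),(2,3),(3,3),(2,2),(3,2),(3,1)],
    [(1,1),(2,1),(3,1),(2,2),(1,2),(1,3),(2,3),(3,3),(3,2)],
    [(1,1),(2,1),(3,1),(3,2),(2,2),(1,2),(1,3),(2,3),(3,3)],
    [(1,2),(1,1),(2,1),(3,1),(3,2),(3,3),(2,2),(2,3),(1,3)],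
    [(1,2),(1,3),(2,3),(3,3),(3,2),(3,1),(2,2),(1,1),(2,1)],
    [(1,2),(1,1),(2,1),(3,1),(3,2),(3,3),(2,3),(1,3),(2,2)],
    [(1,2),(1,1),(2,1),(3,1),(3,2),(3,3),(2,2),(1,3),(2,3)],
    [(1,2),(1,1),(2,1),(3,2),(3,3),(2,3),(1,3),(2,2),(3,1)],
    [(1,2),(1,1),(2,1),(3,1),(2,2),(1,3),(2,3),(3,3),(3,2)],
    [(1,2),(1,1),(2,1),(3,1),(3,2),(2,2),(1,3),(2,3),(3,3)],
    [(1,3),(1,2),(2,3),(3,3),(3,2),(3,1),(2,2),(1,1),(2,1)],
    [(1,3),(1,2),(1,1),(2,1),(3,1),(3,2),(2,3),(3,3),(2,2)],
    [(1,3),(1,2),(1,1),(2,1),(3,1),(2,2),(3,2),(3,3),(2,3)],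
    [(1,3),(1,2),(1,1),(2,1),(2,2),(2,3),(3,3),(3,2),(3,1)],
    [(1,3),(1,2),(1,1),(2,1),(3,1),(2,2),(2,3),(3,3),(3,2)],
    [(1,3),(1,2),(1,1),(2,1),(3,1),(2,2),(2,3),(3,2),(3,3)],
    [(2,1),(1,1),(1,2),(1,3),(2,3),(3,3),(3,2),(3,1),(2,2)],
    [(2,1),(1,1),(1,2),(1,3),(2,2),(3,1),(3,2),(3,3),(2,3)],
    [(2,1),(1,1),(1,2),(1,3),(2,3),(3,3),(2,2),(3,2),(3,1)],
    [(2,1),(1,1),(1,2),(1,3),(2,3),(3,3),(2,2),(3,1),(3,2)],
    [(2,1),(1,1),(1,2),(1,3),(2,3),(2,2),(3,1),(3,2),(3,3)],
    [(2,2),(1,3),(1,2),(1,1),(2,1),(3,1),(3,2),(3,3),(2,3)],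
    [(2,2),(1,1),(2,1),(1,2),(1,3),(2,3),(3,3),(3,2),(3,1)],
    [(2,2),(3,1),(2,1),(1,1),(1,2),(1,3),(2,3),(3,3),(3,2)],
    [(2,2),(1,3),(1,2),(1,1),(2,1),(3,1),(3,2),(2,3),(3,3)],
    [(2,3),(1,3),(1,2),(1,1),(2,1),(2,2),(3,3),(3,2),(3,1)],
    [(2,3),(1,3),(1,2),(1,1),(2,1),(3,1),(2,2),(3,3),(3,2)],
    [(2,3),(1,3),(1,2),(1,1),(2,1),(3,1),(2,2),(3,2),(3,3)],
    [(3,1),(2,1),(1,1),(1,2),(1,3),(2,2),(2,3),(3,3),(3,2)],
    [(3,1),(2,1),(1,1),(1,2),(1,3),(2,2),(2,3),(3,2),(3,3)],
    [(3,2),(3,1),(2,1),(1,1),(1,2),(1,3),(2,2),(2,3),(3,3)]]"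

lemma witnesses_3_3_good: "list_all2 (\<lambda>(s, t). good_witness 3 3 s t) (admissible_pairs 3 3) witnesses_3_3"
  by code_simp

definition witnesses_3_4 :: "vtx list list" where
  "witnesses_3_4 = [[(1,1),(2,1),(3,1),(3,2),(2,2),(3,3),(3,4),(2,4),(1,4),(1,3),(2,3),(1,2)],
    [(1,1),(2,1),(3,1),(3,2),(2,2),(1,2),(2,3),(3,3),(3,4),(2,4),(1,4),(1,3)],
    [(1,1),(2,1),(3,1),(3,2),(2,2),(1,2),(1,3),(2,3),(3,3),(3,4),(2,4),(1,4)],
    [(1,1),(2,1),(3,1),(3,2),(3,3),(3,4),(2,4),(1,4),(1,3),(1,2),(2,3),(2,2)],
    [(1,1),(2,1),(3,1),(3,2),(2,2),(1,2),(1,3),(1,4),(2,4),(3,3),(3,4),(2,3)],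
    [(1,1),(2,1),(3,1),(3,2),(2,2),(1,2),(1,3),(1,4),(2,3),(3,3),(3,4),(2,4)],
    [(1,1),(2,1),(1,2),(1,3),(1,4),(2,4),(3,4),(2,3),(3,3),(2,2),(3,2),(3,1)],
    [(1,1),(2,1),(3,1),(2,2),(1,2),(1,3),(1,4),(2,4),(3,4),(2,3),(3,3),(3,2)],
    [(1,1),(2,1),(3,1),(3,2),(2,2),(1,2),(1,3),(1,4),(2,3),(2,4),(3,4),(3,3)],
    [(1,1),(2,1),(3,1),(3,2),(2,2),(1,2),(1,3),(1,4),(2,3),(3,3),(2,4),(3,4)],
    [(1,2),(1,1),(2,1),(3,1),(3,2),(2,2),(3,3),(3,4),(2,3),(1,4),(2,4),(1,3)],
    [(1,2),(1,1),(2,1),(3,1),(3,2),(2,2),(1,3),(2,3),(3,3),(3,4),(2,4),(1,4)],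
    [(1,2),(1,3),(1,4),(2,4),(3,4),(2,3),(3,3),(3,2),(3,1),(2,2),(1,1),(2,1)],
    [(1,2),(1,1),(2,1),(3,1),(3,2),(3,3),(3,4),(2,4),(1,4),(1,3),(2,3),(2,2)],
    [(1,2),(1,1),(2,1),(3,1),(3,2),(2,2),(1,3),(1,4),(2,4),(3,3),(3,4),(2,3)],
    [(1,2),(1,1),(2,1),(3,1),(3,2),(2,2),(1,3),(1,4),(2,3),(3,3),(3,4),(2,4)],
    [(1,2),(1,1),(2,1),(3,2),(3,3),(3,4),(2,4),(1,4),(1,3),(2,3),(2,2),(3,1)],
    [(1,2),(1,1),(2,1),(3,1),(2,2),(1,3),(1,4),(2,4),(3,4),(2,3),(3,3),(3,2)],
    [(1,2),(1,1),(2,1),(3,1),(3,2),(2,2),(1,3),(1,4),(2,3),(2,4),(3,4),(3,3)],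
    [(1,2),(1,1),(2,1),(3,1),(3,2),(2,2),(1,3),(1,4),(2,3),(3,3),(2,4),(3,4)],
    [(1,3),(1,2),(1,1),(2,1),(3,1),(2,2),(3,2),(3,3),(3,4),(2,3),(2,4),(1,4)],
    [(1,3),(1,4),(2,4),(3,4),(3,3),(2,3),(3,2),(3,1),(2,2),(1,2),(1,1),(2,1)],
    [(1,3),(1,4),(2,4),(3,4),(3,3),(2,3),(1,2),(1,1),(2,1),(3,1),(3,2),(2,2)],
    [(1,3),(1,4),(2,4),(3,4),(3,3),(3,2),(3,1),(2,1),(1,1),(1,2),(2,2),(2,3)],
    [(1,3),(1,4),(2,3),(1,2),(1,1),(2,1),(3,1),(2,2),(3,2),(3,3),(3,4),(2,4)],
    [(1,3),(1,4),(2,4),(3,4),(3,3),(2,3),(1,2),(1,1),(2,1),(2,2),(3,2),(3,1)],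
    [(1,3),(1,4),(2,4),(3,4),(3,3),(2,3),(1,2),(1,1),(2,1),(2,2),(3,1),(3,2)],
    [(1,3),(1,4),(2,4),(3,4),(2,3),(1,2),(1,1),(2,1),(3,1),(2,2),(3,2),(3,3)],
    [(1,3),(1,4),(2,4),(3,3),(3,2),(3,1),(2,1),(1,1),(1,2),(2,2),(2,3),(3,4)],
    [(1,4),(1,3),(2,4),(3,4),(3,3),(2,3),(3,2),(3,1),(2,2),(1,2),(1,1),(2,1)],
    [(1,4),(1,3),(2,4),(3,4),(3,3),(2,3),(1,2),(1,1),(2,1),(3,1),(3,2),(2,2)],
    [(1,4),(1,3),(2,4),(3,4),(3,3),(3,2),(3,1),(2,1),(1,1),(1,2),(2,2),(2,3)],
    [(1,4),(1,3),(1,2),(1,1),(2,1),(3,1),(2,2),(3,2),(2,3),(3,3),(3,4),(2,4)],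
    [(1,4),(1,3),(2,4),(3,4),(3,3),(2,3),(1,2),(1,1),(2,1),(2,2),(3,2),(3,1)],
    [(1,4),(1,3),(2,4),(3,4),(3,3),(2,3),(1,2),(1,1),(2,1),(2,2),(3,1),(3,2)],
    [(1,4),(1,3),(2,4),(3,4),(2,3),(1,2),(1,1),(2,1),(3,1),(2,2),(3,2),(3,3)],
    [(1,4),(1,3),(1,2),(1,1),(2,1),(3,1),(2,2),(3,2),(3,3),(2,3),(2,4),(3,4)],
    [(2,1),(1,1),(1,2),(1,3),(1,4),(2,4),(3,4),(2,3),(3,3),(3,2),(3,1),(2,2)],
    [(2,1),(1,1),(1,2),(1,3),(1,4),(2,4),(3,4),(3,3),(2,2),(3,1),(3,2),(2,3)],
    [(2,1),(1,1),(1,2),(1,3),(1,4),(2,3),(2,2),(3,1),(3,2),(3,3),(3,4),(2,4)],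
    [(2,1),(1,1),(1,2),(1,3),(1,4),(2,4),(3,4),(2,3),(3,3),(2,2),(3,2),(3,1)],
    [(2,1),(1,1),(1,2),(1,3),(1,4),(2,4),(3,4),(2,3),(3,3),(2,2),(3,1),(3,2)],
    [(2,1),(1,1),(1,2),(1,3),(1,4),(2,4),(3,4),(2,3),(2,2),(3,1),(3,2),(3,3)],
    [(2,1),(1,1),(1,2),(1,3),(1,4),(2,4),(2,3),(2,2),(3,1),(3,2),(3,3),(3,4)],
    [(2,2),(1,1),(2,1),(3,1),(3,2),(3,3),(3,4),(2,4),(1,4),(1,3),(1,2),(2,3)],
    [(2,2),(1,1),(2,1),(3,1),(3,2),(3,3),(3,4),(2,3),(1,2),(1,3),(1,4),(2,4)],
    [(2,2),(1,1),(2,1),(1,2),(1,3),(1,4),(2,4),(3,4),(2,3),(3,3),(3,2),(3,1)],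
    [(2,2),(3,1),(2,1),(1,1),(1,2),(1,3),(1,4),(2,4),(3,4),(2,3),(3,3),(3,2)],
    [(2,2),(1,1),(2,1),(3,1),(3,2),(2,3),(1,2),(1,3),(1,4),(2,4),(3,4),(3,3)],
    [(2,2),(1,1),(2,1),(3,1),(3,2),(3,3),(2,4),(1,4),(1,3),(1,2),(2,3),(3,4)],
    [(2,3),(1,4),(1,3),(1,2),(1,1),(2,1),(3,1),(2,2),(3,2),(3,3),(3,4),(2,4)],
    [(2,3),(1,4),(1,3),(2,4),(3,4),(3,3),(3,2),(2,1),(1,1),(1,2),(2,2),(3,1)],
    [(2,3),(1,4),(1,3),(2,4),(3,4),(3,3),(2,2),(1,2),(1,1),(2,1),(3,1),(3,2)],
    [(2,3),(3,4),(2,4),(1,4),(1,3),(1,2),(1,1),(2,1),(3,1),(2,2),(3,2),(3,3)],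
    [(2,3),(1,4),(1,3),(1,2),(1,1),(2,1),(3,1),(2,2),(3,2),(3,3),(2,4),(3,4)],
    [(2,4),(1,4),(1,3),(1,2),(1,1),(2,1),(2,2),(2,3),(3,4),(3,3),(3,2),(3,1)],
    [(2,4),(1,4),(1,3),(1,2),(1,1),(2,1),(3,1),(2,2),(2,3),(3,4),(3,3),(3,2)],
    [(2,4),(1,4),(1,3),(1,2),(1,1),(2,1),(3,1),(2,2),(3,2),(2,3),(3,4),(3,3)],
    [(2,4),(1,4),(1,3),(1,2),(1,1),(2,1),(3,1),(2,2),(3,2),(2,3),(3,3),(3,4)],
    [(3,1),(2,1),(1,1),(1,2),(1,3),(1,4),(2,4),(3,4),(2,3),(2,2),(3,3),(3,2)],
    [(3,1),(2,1),(1,1),(1,2),(1,3),(1,4),(2,4),(3,4),(2,3),(2,2),(3,2),(3,3)],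
    [(3,1),(2,1),(1,1),(1,2),(1,3),(1,4),(2,4),(2,3),(2,2),(3,2),(3,3),(3,4)],
    [(3,2),(3,1),(2,1),(1,1),(1,2),(2,2),(1,3),(1,4),(2,3),(2,4),(3,4),(3,3)],
    [(3,2),(3,1),(2,1),(1,1),(1,2),(2,2),(1,3),(1,4),(2,3),(3,3),(2,4),(3,4)],
    [(3,3),(2,4),(1,4),(1,3),(1,2),(1,1),(2,1),(3,1),(3,2),(2,2),(2,3),(3,4)]]"

lemma witnesses_3_4_good: "list_all2 (\<lambda>(s, t). good_witness 3 4 s t) (admissible_pairs 3 4) witnesses_3_4"
  by code_simp

definition witnesses_3_5 :: "vtx list list" where
  "witnesses_3_5 = [[(1,1),(2,1),(3,1),(3,2),(2,2),(3,3),(3,4),(3,5),(2,5),(1,5),(1,4),(2,4),(1,3),(2,3),(1,2)],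
    [(1,1),(2,1),(3,1),(3,2),(2,2),(1,2),(2,3),(3,3),(3,4),(3,5),(2,5),(1,5),(1,4),(2,4),(1,3)],
    [(1,1),(2,1),(3,1),(3,2),(2,2),(1,2),(1,3),(2,3),(3,3),(3,4),(3,5),(2,4),(1,5),(2,5),(1,4)],
    [(1,1),(2,1),(3,1),(3,2),(2,2),(1,2),(1,3),(1,4),(2,3),(3,3),(3,4),(3,5),(2,4),(2,5),(1,5)],
    [(1,1),(2,1),(3,1),(3,2),(3,3),(3,4),(3,5),(2,5),(1,5),(1,4),(2,4),(1,3),(1,2),(2,3),(2,2)],
    [(1,1),(2,1),(3,1),(3,2),(2,2),(1,2),(1,3),(1,4),(1,5),(2,5),(3,5),(2,4),(3,3),(3,4),(2,3)],
    [(1,1),(2,1),(3,1),(3,2),(2,2),(1,2),(1,3),(1,4),(1,5),(2,5),(3,5),(3,4),(2,3),(3,3),(2,4)],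
    [(1,1),(2,1),(3,1),(3,2),(2,2),(1,2),(1,3),(1,4),(1,5),(2,4),(2,3),(3,3),(3,4),(3,5),(2,5)],
    [(1,1),(2,1),(1,2),(1,3),(1,4),(1,5),(2,5),(3,5),(2,4),(3,4),(2,3),(3,3),(2,2),(3,2),(3,1)],
    [(1,1),(2,1),(3,1),(2,2),(1,2),(1,3),(1,4),(1,5),(2,5),(3,5),(2,4),(3,4),(2,3),(3,3),(3,2)],
    [(1,1),(2,1),(3,1),(3,2),(2,2),(1,2),(1,3),(1,4),(1,5),(2,5),(3,5),(2,4),(2,3),(3,4),(3,3)],
    [(1,1),(2,1),(3,1),(3,2),(2,2),(1,2),(1,3),(1,4),(1,5),(2,5),(3,5),(2,4),(2,3),(3,3),(3,4)],
    [(1,1),(2,1),(3,1),(3,2),(2,2),(1,2),(1,3),(1,4),(1,5),(2,5),(2,4),(2,3),(3,3),(3,4),(3,5)],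
    [(1,2),(1,1),(2,1),(3,1),(3,2),(2,2),(3,3),(2,3),(3,4),(3,5),(2,5),(1,5),(1,4),(2,4),(1,3)],
    [(1,2),(1,1),(2,1),(3,1),(3,2),(2,2),(1,3),(2,3),(3,3),(3,4),(3,5),(2,4),(1,5),(2,5),(1,4)],
    [(1,2),(1,1),(2,1),(3,1),(3,2),(2,2),(1,3),(1,4),(2,3),(3,3),(3,4),(3,5),(2,4),(2,5),(1,5)],
    [(1,2),(1,3),(1,4),(1,5),(2,5),(3,5),(2,4),(3,4),(2,3),(3,3),(3,2),(3,1),(2,2),(1,1),(2,1)],
    [(1,2),(1,1),(2,1),(3,1),(3,2),(3,3),(3,4),(3,5),(2,5),(1,5),(1,4),(2,4),(1,3),(2,3),(2,2)],
    [(1,2),(1,1),(2,1),(3,1),(3,2),(2,2),(1,3),(1,4),(1,5),(2,5),(3,5),(2,4),(3,3),(3,4),(2,3)],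
    [(1,2),(1,1),(2,1),(3,1),(3,2),(2,2),(1,3),(1,4),(1,5),(2,5),(3,5),(3,4),(2,3),(3,3),(2,4)],
    [(1,2),(1,1),(2,1),(3,1),(3,2),(2,2),(1,3),(1,4),(1,5),(2,4),(2,3),(3,3),(3,4),(3,5),(2,5)],
    [(1,2),(1,1),(2,1),(3,2),(3,3),(3,4),(3,5),(2,5),(1,5),(1,4),(2,4),(1,3),(2,3),(2,2),(3,1)],
    [(1,2),(1,1),(2,1),(3,1),(2,2),(1,3),(1,4),(1,5),(2,5),(3,5),(2,4),(3,4),(2,3),(3,3),(3,2)],
    [(1,2),(1,1),(2,1),(3,1),(3,2),(2,2),(1,3),(1,4),(1,5),(2,5),(3,5),(2,4),(2,3),(3,4),(3,3)],
    [(1,2),(1,1),(2,1),(3,1),(3,2),(2,2),(1,3),(1,4),(1,5),(2,5),(3,5),(2,4),(2,3),(3,3),(3,4)],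
    [(1,2),(1,1),(2,1),(3,1),(3,2),(2,2),(1,3),(1,4),(1,5),(2,5),(2,4),(2,3),(3,3),(3,4),(3,5)],
    [(1,3),(1,2),(1,1),(2,1),(3,1),(2,2),(3,2),(3,3),(2,3),(3,4),(3,5),(2,4),(1,5),(2,5),(1,4)],
    [(1,3),(1,2),(1,1),(2,1),(3,1),(2,2),(3,2),(3,3),(2,3),(1,4),(2,4),(3,4),(3,5),(2,5),(1,5)],
    [(1,3),(1,2),(2,3),(1,4),(1,5),(2,5),(3,5),(2,4),(3,4),(3,3),(3,2),(3,1),(2,2),(1,1),(2,1)],
    [(1,3),(1,2),(1,1),(2,1),(3,1),(3,2),(3,3),(3,4),(3,5),(2,5),(1,5),(1,4),(2,4),(2,3),(2,2)],
    [(1,3),(1,2),(1,1),(2,1),(3,1),(2,2),(3,2),(3,3),(3,4),(3,5),(2,5),(1,5),(1,4),(2,4),(2,3)],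
    [(1,3),(1,2),(1,1),(2,1),(3,1),(2,2),(3,2),(3,3),(2,3),(1,4),(1,5),(2,5),(3,4),(3,5),(2,4)],
    [(1,3),(1,2),(1,1),(2,1),(3,1),(2,2),(3,2),(3,3),(2,3),(1,4),(1,5),(2,4),(3,4),(3,5),(2,5)],
    [(1,3),(1,2),(1,1),(2,1),(2,2),(3,3),(3,4),(3,5),(2,5),(1,5),(1,4),(2,4),(2,3),(3,2),(3,1)],
    [(1,3),(1,2),(1,1),(2,1),(3,1),(2,2),(3,3),(3,4),(3,5),(2,5),(1,5),(1,4),(2,4),(2,3),(3,2)],
    [(1,3),(1,2),(1,1),(2,1),(3,1),(2,2),(3,2),(2,3),(1,4),(1,5),(2,5),(3,5),(2,4),(3,4),(3,3)],
    [(1,3),(1,2),(1,1),(2,1),(3,1),(2,2),(3,2),(3,3),(2,3),(1,4),(1,5),(2,4),(2,5),(3,5),(3,4)],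
    [(1,3),(1,2),(1,1),(2,1),(3,1),(2,2),(3,2),(3,3),(2,3),(1,4),(1,5),(2,4),(3,4),(2,5),(3,5)],
    [(1,4),(1,3),(1,2),(1,1),(2,1),(3,1),(2,2),(3,2),(2,3),(3,3),(3,4),(3,5),(2,4),(2,5),(1,5)],
    [(1,4),(1,5),(2,5),(3,5),(3,4),(2,4),(1,3),(1,2),(2,3),(3,3),(3,2),(3,1),(2,2),(1,1),(2,1)],
    [(1,4),(1,5),(2,5),(3,5),(3,4),(2,4),(1,3),(1,2),(1,1),(2,1),(3,1),(3,2),(2,3),(3,3),(2,2)],
    [(1,4),(1,5),(2,5),(3,5),(3,4),(2,4),(1,3),(1,2),(1,1),(2,1),(3,1),(2,2),(3,2),(3,3),(2,3)],
    [(1,4),(1,5),(2,5),(3,5),(3,4),(3,3),(3,2),(3,1),(2,1),(1,1),(1,2),(2,2),(1,3),(2,3),(2,4)],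
    [(1,4),(1,5),(2,4),(1,3),(1,2),(1,1),(2,1),(3,1),(2,2),(3,2),(2,3),(3,3),(3,4),(3,5),(2,5)],
    [(1,4),(1,5),(2,5),(3,5),(3,4),(2,4),(1,3),(1,2),(1,1),(2,1),(2,2),(2,3),(3,3),(3,2),(3,1)],
    [(1,4),(1,5),(2,5),(3,5),(3,4),(2,4),(1,3),(1,2),(1,1),(2,1),(3,1),(2,2),(2,3),(3,3),(3,2)],
    [(1,4),(1,5),(2,5),(3,5),(3,4),(2,4),(1,3),(1,2),(1,1),(2,1),(3,1),(2,2),(2,3),(3,2),(3,3)],
    [(1,4),(1,5),(2,5),(3,5),(2,4),(1,3),(1,2),(1,1),(2,1),(3,1),(2,2),(3,2),(2,3),(3,3),(3,4)],
    [(1,4),(1,5),(2,5),(3,4),(3,3),(3,2),(3,1),(2,1),(1,1),(1,2),(2,2),(1,3),(2,3),(2,4),(3,5)],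
    [(1,5),(1,4),(2,5),(3,5),(3,4),(2,4),(1,3),(1,2),(2,3),(3,3),(3,2),(3,1),(2,2),(1,1),(2,1)],
    [(1,5),(1,4),(2,5),(3,5),(3,4),(2,4),(1,3),(1,2),(1,1),(2,1),(3,1),(3,2),(2,3),(3,3),(2,2)],
    [(1,5),(1,4),(2,5),(3,5),(3,4),(2,4),(1,3),(1,2),(1,1),(2,1),(3,1),(2,2),(3,2),(3,3),(2,3)],
    [(1,5),(1,4),(2,5),(3,5),(3,4),(3,3),(3,2),(3,1),(2,1),(1,1),(1,2),(2,2),(1,3),(2,3),(2,4)],
    [(1,5),(1,4),(1,3),(1,2),(1,1),(2,1),(3,1),(2,2),(3,2),(2,3),(3,3),(2,4),(3,4),(3,5),(2,5)],
    [(1,5),(1,4),(2,5),(3,5),(3,4),(2,4),(1,3),(1,2),(1,1),(2,1),(2,2),(2,3),(3,3),(3,2),(3,1)],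
    [(1,5),(1,4),(2,5),(3,5),(3,4),(2,4),(1,3),(1,2),(1,1),(2,1),(3,1),(2,2),(2,3),(3,3),(3,2)],
    [(1,5),(1,4),(2,5),(3,5),(3,4),(2,4),(1,3),(1,2),(1,1),(2,1),(3,1),(2,2),(2,3),(3,2),(3,3)],
    [(1,5),(1,4),(2,5),(3,5),(2,4),(1,3),(1,2),(1,1),(2,1),(3,1),(2,2),(3,2),(2,3),(3,3),(3,4)],
    [(1,5),(1,4),(1,3),(1,2),(1,1),(2,1),(3,1),(2,2),(3,2),(2,3),(3,3),(3,4),(2,4),(2,5),(3,5)],
    [(2,1),(1,1),(1,2),(1,3),(1,4),(1,5),(2,5),(3,5),(2,4),(3,4),(2,3),(3,3),(3,2),(3,1),(2,2)],
    [(2,1),(1,1),(1,2),(1,3),(1,4),(1,5),(2,5),(3,5),(2,4),(3,4),(3,3),(2,2),(3,1),(3,2),(2,3)],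
    [(2,1),(1,1),(1,2),(1,3),(1,4),(1,5),(2,5),(3,5),(3,4),(2,3),(2,2),(3,1),(3,2),(3,3),(2,4)],
    [(2,1),(1,1),(1,2),(1,3),(1,4),(1,5),(2,4),(2,3),(2,2),(3,1),(3,2),(3,3),(3,4),(3,5),(2,5)],
    [(2,1),(1,1),(1,2),(1,3),(1,4),(1,5),(2,5),(3,5),(2,4),(3,4),(2,3),(3,3),(2,2),(3,2),(3,1)],
    [(2,1),(1,1),(1,2),(1,3),(1,4),(1,5),(2,5),(3,5),(2,4),(3,4),(2,3),(3,3),(2,2),(3,1),(3,2)],
    [(2,1),(1,1),(1,2),(1,3),(1,4),(1,5),(2,5),(3,5),(2,4),(3,4),(2,3),(2,2),(3,1),(3,2),(3,3)],
    [(2,1),(1,1),(1,2),(1,3),(1,4),(1,5),(2,5),(3,5),(2,4),(2,3),(2,2),(3,1),(3,2),(3,3),(3,4)],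
    [(2,1),(1,1),(1,2),(1,3),(1,4),(1,5),(2,5),(2,4),(2,3),(2,2),(3,1),(3,2),(3,3),(3,4),(3,5)],
    [(2,2),(1,1),(2,1),(3,1),(3,2),(3,3),(3,4),(3,5),(2,5),(1,5),(1,4),(2,4),(1,3),(1,2),(2,3)],
    [(2,2),(1,1),(2,1),(3,1),(3,2),(3,3),(3,4),(3,5),(2,5),(1,5),(1,4),(1,3),(1,2),(2,3),(2,4)],
    [(2,2),(1,1),(2,1),(3,1),(3,2),(3,3),(3,4),(3,5),(2,4),(1,3),(1,2),(2,3),(1,4),(1,5),(2,5)],
    [(2,2),(1,1),(2,1),(1,2),(1,3),(1,4),(1,5),(2,5),(3,5),(2,4),(3,4),(2,3),(3,3),(3,2),(3,1)],
    [(2,2),(3,1),(2,1),(1,1),(1,2),(1,3),(1,4),(1,5),(2,5),(3,5),(2,4),(3,4),(2,3),(3,3),(3,2)],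
    [(2,2),(1,1),(2,1),(3,1),(3,2),(2,3),(1,2),(1,3),(1,4),(1,5),(2,5),(3,5),(2,4),(3,4),(3,3)],
    [(2,2),(1,1),(2,1),(3,1),(3,2),(3,3),(2,3),(1,2),(1,3),(1,4),(1,5),(2,4),(2,5),(3,5),(3,4)],
    [(2,2),(1,1),(2,1),(3,1),(3,2),(3,3),(3,4),(2,3),(1,2),(1,3),(1,4),(1,5),(2,4),(2,5),(3,5)],
    [(2,3),(1,2),(1,1),(2,1),(3,1),(3,2),(2,2),(1,3),(1,4),(1,5),(2,5),(3,5),(3,4),(3,3),(2,4)],
    [(2,3),(1,2),(1,1),(2,1),(3,1),(3,2),(2,2),(1,3),(1,4),(1,5),(2,4),(3,3),(3,4),(3,5),(2,5)],
    [(2,3),(1,2),(1,1),(2,1),(3,2),(3,3),(3,4),(3,5),(2,5),(1,5),(1,4),(2,4),(1,3),(2,2),(3,1)],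
    [(2,3),(1,2),(1,1),(2,1),(3,1),(2,2),(1,3),(1,4),(1,5),(2,5),(3,5),(2,4),(3,4),(3,3),(3,2)],
    [(2,3),(1,2),(1,1),(2,1),(3,1),(3,2),(2,2),(1,3),(1,4),(1,5),(2,5),(3,5),(2,4),(3,4),(3,3)],
    [(2,3),(1,2),(1,1),(2,1),(3,1),(3,2),(2,2),(1,3),(1,4),(1,5),(2,5),(3,5),(2,4),(3,3),(3,4)],
    [(2,3),(1,2),(1,1),(2,1),(3,1),(3,2),(2,2),(1,3),(1,4),(1,5),(2,5),(2,4),(3,3),(3,4),(3,5)],
    [(2,4),(1,5),(1,4),(1,3),(1,2),(1,1),(2,1),(3,1),(2,2),(3,2),(2,3),(3,3),(3,4),(3,5),(2,5)],
    [(2,4),(1,5),(1,4),(2,5),(3,5),(3,4),(3,3),(2,3),(1,3),(1,2),(1,1),(2,1),(2,2),(3,2),(3,1)],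
    [(2,4),(1,5),(1,4),(2,5),(3,5),(3,4),(3,3),(2,3),(1,3),(1,2),(1,1),(2,1),(2,2),(3,1),(3,2)],
    [(2,4),(1,5),(1,4),(2,5),(3,5),(3,4),(2,3),(1,3),(1,2),(1,1),(2,1),(3,1),(2,2),(3,2),(3,3)],
    [(2,4),(3,5),(2,5),(1,5),(1,4),(1,3),(1,2),(1,1),(2,1),(3,1),(2,2),(3,2),(2,3),(3,3),(3,4)],
    [(2,4),(1,5),(1,4),(1,3),(1,2),(1,1),(2,1),(3,1),(2,2),(3,2),(2,3),(3,3),(3,4),(2,5),(3,5)],
    [(2,5),(1,5),(1,4),(1,3),(1,2),(1,1),(2,1),(2,2),(2,3),(2,4),(3,5),(3,4),(3,3),(3,2),(3,1)],
    [(2,5),(1,5),(1,4),(1,3),(1,2),(1,1),(2,1),(3,1),(2,2),(2,3),(2,4),(3,5),(3,4),(3,3),(3,2)],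
    [(2,5),(1,5),(1,4),(1,3),(1,2),(1,1),(2,1),(3,1),(2,2),(3,2),(2,3),(2,4),(3,5),(3,4),(3,3)],
    [(2,5),(1,5),(1,4),(1,3),(1,2),(1,1),(2,1),(3,1),(2,2),(3,2),(2,3),(3,3),(2,4),(3,5),(3,4)],
    [(2,5),(1,5),(1,4),(1,3),(1,2),(1,1),(2,1),(3,1),(2,2),(3,2),(2,3),(3,3),(2,4),(3,4),(3,5)],
    [(3,1),(2,1),(1,1),(1,2),(1,3),(2,2),(3,3),(3,4),(3,5),(2,5),(1,5),(1,4),(2,4),(2,3),(3,2)],
    [(3,1),(2,1),(1,1),(1,2),(1,3),(2,2),(3,2),(2,3),(1,4),(1,5),(2,5),(3,5),(2,4),(3,4),(3,3)],
    [(3,1),(2,1),(1,1),(1,2),(1,3),(2,2),(3,2),(3,3),(2,3),(1,4),(1,5),(2,4),(2,5),(3,5),(3,4)],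
    [(3,1),(2,1),(1,1),(1,2),(1,3),(2,2),(3,2),(3,3),(2,3),(1,4),(1,5),(2,4),(3,4),(2,5),(3,5)],
    [(3,2),(3,1),(2,1),(1,1),(1,2),(2,2),(1,3),(1,4),(1,5),(2,5),(3,5),(2,4),(2,3),(3,4),(3,3)],
    [(3,2),(3,1),(2,1),(1,1),(1,2),(2,2),(1,3),(1,4),(1,5),(2,5),(3,5),(2,4),(2,3),(3,3),(3,4)],
    [(3,2),(3,1),(2,1),(1,1),(1,2),(2,2),(1,3),(1,4),(1,5),(2,5),(2,4),(2,3),(3,3),(3,4),(3,5)],
    [(3,3),(3,2),(3,1),(2,1),(1,1),(1,2),(2,2),(1,3),(2,3),(1,4),(1,5),(2,4),(2,5),(3,5),(3,4)],
    [(3,3),(3,2),(3,1),(2,1),(1,1),(1,2),(2,2),(1,3),(2,3),(1,4),(1,5),(2,4),(3,4),(2,5),(3,5)],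
    [(3,4),(2,5),(1,5),(1,4),(1,3),(1,2),(1,1),(2,1),(3,1),(2,2),(3,2),(3,3),(2,3),(2,4),(3,5)]]"

lemma witnesses_3_5_good: "list_all2 (\<lambda>(s, t). good_witness 3 5 s t) (admissible_pairs 3 5) witnesses_3_5"
  by code_simp

definition witnesses_4_2 :: "vtx list list" where
  "witnesses_4_2 = [[(1,1),(2,1),(3,1),(4,1),(4,2),(3,2),(2,2),(1,2)],
    [(1,1),(2,1),(1,2),(2,2),(3,2),(4,1),(4,2),(3,1)],
    [(1,1),(2,1),(1,2),(2,2),(3,1),(4,1),(4,2),(3,2)],
    [(1,1),(2,1),(1,2),(2,2),(3,1),(3,2),(4,2),(4,1)],
    [(1,1),(2,1),(1,2),(2,2),(3,1),(3,2),(4,1),(4,2)],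
    [(1,2),(1,1),(2,1),(3,1),(4,1),(4,2),(3,2),(2,2)],
    [(1,2),(1,1),(2,1),(2,2),(3,2),(4,1),(4,2),(3,1)],
    [(1,2),(1,1),(2,1),(2,2),(3,1),(4,1),(4,2),(3,2)],
    [(1,2),(1,1),(2,1),(2,2),(3,1),(3,2),(4,2),(4,1)],
    [(1,2),(1,1),(2,1),(2,2),(3,1),(3,2),(4,1),(4,2)],
    [(2,1),(1,1),(1,2),(2,2),(3,2),(4,1),(4,2),(3,1)],
    [(2,1),(1,1),(1,2),(2,2),(3,1),(4,1),(4,2),(3,2)],
    [(2,1),(1,1),(1,2),(2,2),(3,1),(3,2),(4,2),(4,1)],
    [(2,1),(1,1),(1,2),(2,2),(3,1),(3,2),(4,1),(4,2)],
    [(2,2),(1,2),(1,1),(2,1),(3,2),(4,1),(4,2),(3,1)],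
    [(2,2),(1,2),(1,1),(2,1),(3,1),(4,1),(4,2),(3,2)],
    [(2,2),(1,2),(1,1),(2,1),(3,1),(3,2),(4,2),(4,1)],
    [(2,2),(1,2),(1,1),(2,1),(3,1),(3,2),(4,1),(4,2)],
    [(3,1),(2,1),(1,1),(1,2),(2,2),(3,2),(4,2),(4,1)],
    [(3,1),(2,1),(1,1),(1,2),(2,2),(3,2),(4,1),(4,2)],
    [(3,2),(2,1),(1,1),(1,2),(2,2),(3,1),(4,2),(4,1)],
    [(3,2),(2,1),(1,1),(1,2),(2,2),(3,1),(4,1),(4,2)],
    [(4,1),(3,1),(2,1),(1,1),(1,2),(2,2),(3,2),(4,2)]]"

lemma witnesses_4_2_good: "list_all2 (\<lambda>(s, t). good_witness 4 2 s t) (admissible_pairs 4 2) witnesses_4_2"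
  by code_simp

definition witnesses_4_3 :: "vtx list list" where
  "witnesses_4_3 = [[(1,1),(2,1),(3,1),(4,1),(4,2),(4,3),(3,2),(3,3),(2,2),(1,3),(2,3),(1,2)],
    [(1,1),(2,1),(1,2),(2,3),(3,3),(4,3),(4,2),(4,1),(3,1),(3,2),(2,2),(1,3)],
    [(1,1),(2,1),(1,2),(1,3),(2,3),(3,3),(4,3),(4,2),(4,1),(3,1),(3,2),(2,2)],
    [(1,1),(2,1),(1,2),(1,3),(2,2),(3,1),(4,1),(4,2),(4,3),(3,2),(3,3),(2,3)],
    [(1,1),(2,1),(1,2),(1,3),(2,3),(2,2),(3,3),(4,3),(3,2),(4,1),(4,2),(3,1)],
    [(1,1),(2,1),(1,2),(1,3),(2,3),(2,2),(3,1),(4,1),(4,2),(3,3),(4,3),(3,2)],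
    [(1,1),(2,1),(1,2),(1,3),(2,3),(2,2),(3,1),(4,1),(3,2),(4,2),(4,3),(3,3)],
    [(1,1),(2,1),(1,2),(1,3),(2,3),(2,2),(3,1),(3,2),(3,3),(4,3),(4,2),(4,1)],
    [(1,1),(2,1),(1,2),(1,3),(2,3),(2,2),(3,1),(4,1),(3,2),(3,3),(4,3),(4,2)],
    [(1,1),(2,1),(1,2),(1,3),(2,3),(2,2),(3,1),(4,1),(3,2),(3,3),(4,2),(4,3)],
    [(1,2),(1,1),(2,1),(3,1),(4,1),(4,2),(4,3),(3,2),(3,3),(2,2),(2,3),(1,3)],
    [(1,2),(1,3),(2,3),(3,3),(4,3),(4,2),(4,1),(3,1),(3,2),(2,2),(1,1),(2,1)],
    [(1,2),(1,1),(2,1),(3,1),(4,1),(4,2),(4,3),(3,2),(3,3),(2,3),(1,3),(2,2)],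
    [(1,2),(1,1),(2,1),(3,1),(4,1),(4,2),(4,3),(3,2),(3,3),(2,2),(1,3),(2,3)],
    [(1,2),(1,1),(2,1),(2,2),(1,3),(2,3),(3,3),(4,3),(3,2),(4,1),(4,2),(3,1)],
    [(1,2),(1,1),(2,1),(3,1),(4,1),(4,2),(4,3),(3,3),(2,2),(1,3),(2,3),(3,2)],
    [(1,2),(1,1),(2,1),(3,1),(4,1),(4,2),(4,3),(3,2),(2,2),(1,3),(2,3),(3,3)],
    [(1,2),(1,1),(2,1),(3,1),(2,2),(1,3),(2,3),(3,3),(4,3),(3,2),(4,2),(4,1)],
    [(1,2),(1,1),(2,1),(3,1),(4,1),(3,2),(2,2),(1,3),(2,3),(3,3),(4,3),(4,2)],
    [(1,2),(1,1),(2,1),(3,1),(4,1),(4,2),(3,2),(2,2),(1,3),(2,3),(3,3),(4,3)],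
    [(1,3),(1,2),(2,3),(3,3),(4,3),(4,2),(4,1),(3,1),(3,2),(2,2),(1,1),(2,1)],
    [(1,3),(1,2),(1,1),(2,1),(3,1),(4,1),(4,2),(4,3),(3,2),(2,3),(3,3),(2,2)],
    [(1,3),(1,2),(1,1),(2,1),(2,2),(3,1),(4,1),(4,2),(4,3),(3,2),(3,3),(2,3)],
    [(1,3),(1,2),(1,1),(2,1),(2,2),(2,3),(3,3),(4,3),(3,2),(4,1),(4,2),(3,1)],
    [(1,3),(1,2),(1,1),(2,1),(2,2),(2,3),(3,3),(4,3),(4,2),(3,1),(4,1),(3,2)],
    [(1,3),(1,2),(1,1),(2,1),(2,2),(2,3),(3,2),(3,1),(4,1),(4,2),(4,3),(3,3)],
    [(1,3),(1,2),(1,1),(2,1),(2,2),(2,3),(3,3),(4,3),(3,2),(3,1),(4,2),(4,1)],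
    [(1,3),(1,2),(1,1),(2,1),(2,2),(2,3),(3,3),(4,3),(3,2),(3,1),(4,1),(4,2)],
    [(1,3),(1,2),(1,1),(2,1),(2,2),(2,3),(3,3),(3,2),(3,1),(4,1),(4,2),(4,3)],
    [(2,1),(1,1),(1,2),(1,3),(2,3),(3,3),(4,3),(4,2),(4,1),(3,1),(3,2),(2,2)],
    [(2,1),(1,1),(1,2),(1,3),(2,2),(3,1),(4,1),(4,2),(4,3),(3,2),(3,3),(2,3)],
    [(2,1),(1,1),(1,2),(1,3),(2,3),(2,2),(3,3),(4,3),(3,2),(4,1),(4,2),(3,1)],
    [(2,1),(1,1),(1,2),(1,3),(2,3),(2,2),(3,1),(4,1),(4,2),(3,3),(4,3),(3,2)],
    [(2,1),(1,1),(1,2),(1,3),(2,3),(2,2),(3,1),(4,1),(3,2),(4,2),(4,3),(3,3)],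
    [(2,1),(1,1),(1,2),(1,3),(2,3),(2,2),(3,1),(3,2),(3,3),(4,3),(4,2),(4,1)],
    [(2,1),(1,1),(1,2),(1,3),(2,3),(2,2),(3,1),(4,1),(3,2),(3,3),(4,3),(4,2)],
    [(2,1),(1,1),(1,2),(1,3),(2,3),(2,2),(3,1),(4,1),(3,2),(3,3),(4,2),(4,3)],
    [(2,2),(1,3),(1,2),(1,1),(2,1),(3,1),(4,1),(4,2),(4,3),(3,2),(3,3),(2,3)],
    [(2,2),(1,1),(2,1),(1,2),(1,3),(2,3),(3,3),(4,3),(3,2),(4,1),(4,2),(3,1)],
    [(2,2),(1,1),(2,1),(1,2),(1,3),(2,3),(3,3),(4,3),(4,2),(3,1),(4,1),(3,2)],
    [(2,2),(1,1),(2,1),(1,2),(1,3),(2,3),(3,2),(3,1),(4,1),(4,2),(4,3),(3,3)],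
    [(2,2),(1,1),(2,1),(1,2),(1,3),(2,3),(3,3),(4,3),(3,2),(3,1),(4,2),(4,1)],
    [(2,2),(1,1),(2,1),(1,2),(1,3),(2,3),(3,3),(4,3),(3,2),(3,1),(4,1),(4,2)],
    [(2,2),(1,1),(2,1),(1,2),(1,3),(2,3),(3,3),(3,2),(3,1),(4,1),(4,2),(4,3)],
    [(2,3),(1,3),(1,2),(1,1),(2,1),(2,2),(3,3),(4,3),(3,2),(4,1),(4,2),(3,1)],
    [(2,3),(1,3),(1,2),(1,1),(2,1),(2,2),(3,1),(4,1),(4,2),(3,3),(4,3),(3,2)],
    [(2,3),(1,3),(1,2),(1,1),(2,1),(2,2),(3,1),(4,1),(3,2),(4,2),(4,3),(3,3)],
    [(2,3),(1,3),(1,2),(1,1),(2,1),(2,2),(3,1),(3,2),(3,3),(4,3),(4,2),(4,1)],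
    [(2,3),(1,3),(1,2),(1,1),(2,1),(2,2),(3,1),(4,1),(3,2),(3,3),(4,3),(4,2)],
    [(2,3),(1,3),(1,2),(1,1),(2,1),(2,2),(3,1),(4,1),(3,2),(3,3),(4,2),(4,3)],
    [(3,1),(4,1),(4,2),(4,3),(3,3),(2,3),(1,3),(1,2),(1,1),(2,1),(2,2),(3,2)],
    [(3,1),(4,1),(4,2),(4,3),(3,2),(2,1),(1,1),(1,2),(1,3),(2,2),(2,3),(3,3)],
    [(3,1),(2,1),(1,1),(1,2),(1,3),(2,2),(2,3),(3,3),(4,3),(3,2),(4,2),(4,1)],
    [(3,1),(4,1),(3,2),(2,1),(1,1),(1,2),(1,3),(2,2),(2,3),(3,3),(4,3),(4,2)],
    [(3,1),(4,1),(4,2),(3,3),(2,3),(1,3),(1,2),(1,1),(2,1),(2,2),(3,2),(4,3)],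
    [(3,2),(4,3),(4,2),(4,1),(3,1),(2,1),(1,1),(1,2),(1,3),(2,2),(2,3),(3,3)],
    [(3,2),(4,3),(3,3),(2,3),(1,3),(1,2),(1,1),(2,1),(2,2),(3,1),(4,2),(4,1)],
    [(3,2),(4,1),(3,1),(2,1),(1,1),(1,2),(1,3),(2,2),(2,3),(3,3),(4,3),(4,2)],
    [(3,2),(4,1),(3,1),(2,1),(1,1),(1,2),(1,3),(2,2),(2,3),(3,3),(4,2),(4,3)],
    [(3,3),(4,3),(4,2),(3,1),(2,1),(1,1),(1,2),(1,3),(2,2),(2,3),(3,2),(4,1)],
    [(3,3),(4,3),(3,2),(2,3),(1,3),(1,2),(1,1),(2,1),(2,2),(3,1),(4,1),(4,2)],
    [(3,3),(2,3),(1,3),(1,2),(1,1),(2,1),(2,2),(3,1),(4,1),(3,2),(4,2),(4,3)],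
    [(4,1),(3,1),(2,1),(1,1),(1,2),(1,3),(2,2),(2,3),(3,2),(3,3),(4,3),(4,2)],
    [(4,1),(3,1),(2,1),(1,1),(1,2),(1,3),(2,2),(2,3),(3,2),(3,3),(4,2),(4,3)],
    [(4,2),(4,1),(3,1),(2,1),(1,1),(1,2),(1,3),(2,2),(2,3),(3,2),(3,3),(4,3)]]"

lemma witnesses_4_3_good: "list_all2 (\<lambda>(s, t). good_witness 4 3 s t) (admissible_pairs 4 3) witnesses_4_3"
  by code_simp

definition witnesses_4_4 :: "vtx list list" where
  "witnesses_4_4 = [[(1,1),(2,1),(3,1),(4,1),(4,2),(3,2),(4,3),(4,4),(3,4),(3,3),(2,2),(1,3),(1,4),(2,4),(2,3),(1,2)],
    [(1,1),(2,1),(1,2),(2,2),(3,1),(4,1),(4,2),(3,2),(4,3),(4,4),(3,3),(3,4),(2,3),(1,4),(2,4),(1,3)],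
    [(1,1),(2,1),(1,2),(1,3),(2,2),(3,1),(4,1),(4,2),(3,2),(4,3),(4,4),(3,3),(3,4),(2,3),(2,4),(1,4)],
    [(1,1),(2,1),(1,2),(1,3),(1,4),(2,4),(2,3),(3,4),(4,4),(4,3),(3,3),(4,2),(4,1),(3,1),(3,2),(2,2)],
    [(1,1),(2,1),(1,2),(1,3),(1,4),(2,4),(3,4),(4,4),(4,3),(3,3),(2,2),(3,1),(4,1),(4,2),(3,2),(2,3)],
    [(1,1),(2,1),(1,2),(1,3),(1,4),(2,3),(2,2),(3,1),(4,1),(3,2),(4,2),(4,3),(4,4),(3,3),(3,4),(2,4)],
    [(1,1),(2,1),(1,2),(1,3),(1,4),(2,4),(2,3),(2,2),(3,2),(3,3),(3,4),(4,4),(4,3),(4,2),(4,1),(3,1)],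
    [(1,1),(2,1),(1,2),(1,3),(1,4),(2,4),(2,3),(2,2),(3,1),(4,1),(4,2),(3,3),(3,4),(4,4),(4,3),(3,2)],
    [(1,1),(2,1),(1,2),(1,3),(1,4),(2,4),(2,3),(2,2),(3,1),(4,1),(3,2),(4,2),(4,3),(3,4),(4,4),(3,3)],
    [(1,1),(2,1),(1,2),(1,3),(1,4),(2,4),(2,3),(2,2),(3,1),(4,1),(3,2),(4,2),(3,3),(4,3),(4,4),(3,4)],
    [(1,1),(2,1),(1,2),(1,3),(1,4),(2,4),(2,3),(2,2),(3,1),(3,2),(3,3),(3,4),(4,4),(4,3),(4,2),(4,1)],
    [(1,1),(2,1),(1,2),(1,3),(1,4),(2,4),(2,3),(2,2),(3,1),(4,1),(3,2),(3,3),(3,4),(4,4),(4,3),(4,2)],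
    [(1,1),(2,1),(1,2),(1,3),(1,4),(2,4),(2,3),(2,2),(3,1),(4,1),(3,2),(4,2),(3,3),(3,4),(4,4),(4,3)],
    [(1,1),(2,1),(1,2),(1,3),(1,4),(2,4),(2,3),(2,2),(3,1),(4,1),(3,2),(4,2),(3,3),(3,4),(4,3),(4,4)],
    [(1,2),(1,1),(2,1),(3,1),(4,1),(4,2),(3,2),(2,2),(2,3),(3,3),(4,3),(4,4),(3,4),(2,4),(1,4),(1,3)],
    [(1,2),(1,1),(2,1),(3,1),(4,1),(4,2),(3,2),(2,2),(1,3),(2,3),(3,3),(4,3),(4,4),(3,4),(2,4),(1,4)],
    [(1,2),(1,3),(1,4),(2,4),(2,3),(3,4),(4,4),(4,3),(3,3),(4,2),(4,1),(3,1),(3,2),(2,2),(1,1),(2,1)],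
    [(1,2),(1,1),(2,1),(3,1),(4,1),(4,2),(3,2),(4,3),(4,4),(3,4),(3,3),(2,4),(1,4),(1,3),(2,3),(2,2)],
    [(1,2),(1,1),(2,1),(3,1),(4,1),(4,2),(3,2),(2,2),(1,3),(1,4),(2,4),(3,3),(4,3),(4,4),(3,4),(2,3)],
    [(1,2),(1,1),(2,1),(3,1),(4,1),(4,2),(3,2),(2,2),(1,3),(1,4),(2,3),(3,3),(4,3),(4,4),(3,4),(2,4)],
    [(1,2),(1,1),(2,1),(2,2),(1,3),(1,4),(2,4),(2,3),(3,4),(4,4),(3,3),(4,3),(3,2),(4,1),(4,2),(3,1)],
    [(1,2),(1,1),(2,1),(3,1),(4,1),(4,2),(4,3),(4,4),(3,4),(2,4),(1,4),(1,3),(2,2),(2,3),(3,3),(3,2)],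
    [(1,2),(1,1),(2,1),(3,1),(4,1),(4,2),(3,2),(2,2),(1,3),(1,4),(2,3),(2,4),(3,4),(4,3),(4,4),(3,3)],
    [(1,2),(1,1),(2,1),(3,1),(4,1),(4,2),(3,2),(2,2),(1,3),(1,4),(2,3),(2,4),(3,3),(4,3),(4,4),(3,4)],
    [(1,2),(1,1),(2,1),(3,1),(2,2),(1,3),(1,4),(2,4),(2,3),(3,4),(4,4),(3,3),(4,3),(3,2),(4,2),(4,1)],
    [(1,2),(1,1),(2,1),(3,1),(4,1),(3,2),(2,2),(1,3),(1,4),(2,3),(2,4),(3,4),(4,4),(3,3),(4,3),(4,2)],
    [(1,2),(1,1),(2,1),(3,1),(4,1),(4,2),(3,2),(2,2),(1,3),(1,4),(2,3),(2,4),(3,3),(3,4),(4,4),(4,3)],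
    [(1,2),(1,1),(2,1),(3,1),(4,1),(4,2),(3,2),(2,2),(1,3),(1,4),(2,3),(2,4),(3,3),(4,3),(3,4),(4,4)],
    [(1,3),(1,2),(1,1),(2,1),(2,2),(3,1),(4,1),(4,2),(3,2),(4,3),(4,4),(3,3),(3,4),(2,3),(2,4),(1,4)],
    [(1,3),(1,4),(2,4),(3,4),(4,4),(4,3),(3,3),(2,3),(3,2),(4,1),(4,2),(3,1),(2,2),(1,2),(1,1),(2,1)],
    [(1,3),(1,4),(2,4),(3,4),(4,4),(4,3),(3,3),(2,3),(1,2),(1,1),(2,1),(3,1),(4,1),(4,2),(3,2),(2,2)],
    [(1,3),(1,4),(2,4),(3,4),(4,4),(4,3),(3,3),(4,2),(4,1),(3,1),(3,2),(2,1),(1,1),(1,2),(2,2),(2,3)],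
    [(1,3),(1,4),(2,3),(1,2),(1,1),(2,1),(2,2),(3,1),(4,1),(3,2),(4,2),(4,3),(4,4),(3,3),(3,4),(2,4)],
    [(1,3),(1,4),(2,4),(3,4),(4,4),(4,3),(3,3),(2,3),(1,2),(1,1),(2,1),(2,2),(3,2),(4,1),(4,2),(3,1)],
    [(1,3),(1,4),(2,4),(3,4),(4,4),(4,3),(3,3),(2,3),(1,2),(1,1),(2,1),(2,2),(3,1),(4,1),(4,2),(3,2)],
    [(1,3),(1,4),(2,4),(3,4),(4,4),(4,3),(4,2),(4,1),(3,1),(2,1),(1,1),(1,2),(2,2),(2,3),(3,2),(3,3)],
    [(1,3),(1,4),(2,4),(2,3),(1,2),(1,1),(2,1),(2,2),(3,1),(4,1),(3,2),(4,2),(3,3),(4,3),(4,4),(3,4)],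
    [(1,3),(1,4),(2,4),(3,4),(4,4),(4,3),(3,3),(2,3),(1,2),(1,1),(2,1),(2,2),(3,1),(3,2),(4,2),(4,1)],
    [(1,3),(1,4),(2,4),(3,4),(4,4),(4,3),(3,3),(2,3),(1,2),(1,1),(2,1),(2,2),(3,1),(3,2),(4,1),(4,2)],
    [(1,3),(1,4),(2,4),(3,4),(4,4),(3,3),(2,3),(1,2),(1,1),(2,1),(2,2),(3,1),(4,1),(3,2),(4,2),(4,3)],
    [(1,3),(1,4),(2,4),(3,4),(2,3),(1,2),(1,1),(2,1),(2,2),(3,1),(4,1),(3,2),(4,2),(3,3),(4,3),(4,4)],
    [(1,4),(1,3),(2,4),(3,4),(4,4),(4,3),(3,3),(2,3),(3,2),(4,1),(4,2),(3,1),(2,2),(1,2),(1,1),(2,1)],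
    [(1,4),(1,3),(2,4),(3,4),(4,4),(4,3),(3,3),(2,3),(1,2),(1,1),(2,1),(3,1),(4,1),(4,2),(3,2),(2,2)],
    [(1,4),(1,3),(2,4),(3,4),(4,4),(4,3),(3,3),(4,2),(4,1),(3,1),(3,2),(2,1),(1,1),(1,2),(2,2),(2,3)],
    [(1,4),(1,3),(1,2),(1,1),(2,1),(2,2),(3,1),(4,1),(4,2),(3,2),(2,3),(3,3),(4,3),(4,4),(3,4),(2,4)],
    [(1,4),(1,3),(2,4),(3,4),(4,4),(4,3),(3,3),(2,3),(1,2),(1,1),(2,1),(2,2),(3,2),(4,1),(4,2),(3,1)],
    [(1,4),(1,3),(2,4),(3,4),(4,4),(4,3),(3,3),(2,3),(1,2),(1,1),(2,1),(2,2),(3,1),(4,1),(4,2),(3,2)],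
    [(1,4),(1,3),(2,4),(3,4),(4,4),(4,3),(4,2),(4,1),(3,1),(2,1),(1,1),(1,2),(2,2),(2,3),(3,2),(3,3)],
    [(1,4),(1,3),(2,4),(2,3),(1,2),(1,1),(2,1),(2,2),(3,1),(4,1),(3,2),(4,2),(3,3),(4,3),(4,4),(3,4)],
    [(1,4),(1,3),(2,4),(3,4),(4,4),(4,3),(3,3),(2,3),(1,2),(1,1),(2,1),(2,2),(3,1),(3,2),(4,2),(4,1)],
    [(1,4),(1,3),(2,4),(3,4),(4,4),(4,3),(3,3),(2,3),(1,2),(1,1),(2,1),(2,2),(3,1),(3,2),(4,1),(4,2)],
    [(1,4),(1,3),(2,4),(3,4),(4,4),(3,3),(2,3),(1,2),(1,1),(2,1),(2,2),(3,1),(4,1),(3,2),(4,2),(4,3)],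
    [(1,4),(1,3),(2,4),(3,4),(2,3),(1,2),(1,1),(2,1),(2,2),(3,1),(4,1),(3,2),(4,2),(3,3),(4,3),(4,4)],
    [(2,1),(1,1),(1,2),(1,3),(1,4),(2,4),(2,3),(3,4),(4,4),(4,3),(3,3),(4,2),(4,1),(3,1),(3,2),(2,2)],
    [(2,1),(1,1),(1,2),(1,3),(1,4),(2,4),(3,4),(4,4),(4,3),(3,3),(2,2),(3,1),(4,1),(4,2),(3,2),(2,3)],
    [(2,1),(1,1),(1,2),(1,3),(1,4),(2,3),(2,2),(3,1),(4,1),(3,2),(4,2),(4,3),(4,4),(3,3),(3,4),(2,4)],
    [(2,1),(1,1),(1,2),(1,3),(1,4),(2,4),(2,3),(2,2),(3,2),(3,3),(3,4),(4,4),(4,3),(4,2),(4,1),(3,1)],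
    [(2,1),(1,1),(1,2),(1,3),(1,4),(2,4),(2,3),(2,2),(3,1),(4,1),(4,2),(3,3),(3,4),(4,4),(4,3),(3,2)],
    [(2,1),(1,1),(1,2),(1,3),(1,4),(2,4),(2,3),(2,2),(3,1),(4,1),(3,2),(4,2),(4,3),(3,4),(4,4),(3,3)],
    [(2,1),(1,1),(1,2),(1,3),(1,4),(2,4),(2,3),(2,2),(3,1),(4,1),(3,2),(4,2),(3,3),(4,3),(4,4),(3,4)],
    [(2,1),(1,1),(1,2),(1,3),(1,4),(2,4),(2,3),(2,2),(3,1),(3,2),(3,3),(3,4),(4,4),(4,3),(4,2),(4,1)],
    [(2,1),(1,1),(1,2),(1,3),(1,4),(2,4),(2,3),(2,2),(3,1),(4,1),(3,2),(3,3),(3,4),(4,4),(4,3),(4,2)],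
    [(2,1),(1,1),(1,2),(1,3),(1,4),(2,4),(2,3),(2,2),(3,1),(4,1),(3,2),(4,2),(3,3),(3,4),(4,4),(4,3)],
    [(2,1),(1,1),(1,2),(1,3),(1,4),(2,4),(2,3),(2,2),(3,1),(4,1),(3,2),(4,2),(3,3),(3,4),(4,3),(4,4)],
    [(2,2),(1,1),(2,1),(1,2),(1,3),(1,4),(2,4),(3,4),(4,4),(4,3),(3,3),(4,2),(3,1),(4,1),(3,2),(2,3)],
    [(2,2),(1,1),(2,1),(1,2),(1,3),(1,4),(2,3),(3,4),(4,4),(4,3),(3,2),(3,1),(4,1),(4,2),(3,3),(2,4)],
    [(2,2),(1,1),(2,1),(1,2),(1,3),(1,4),(2,4),(2,3),(3,4),(4,4),(3,3),(4,3),(3,2),(4,1),(4,2),(3,1)],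
    [(2,2),(1,1),(2,1),(1,2),(1,3),(1,4),(2,4),(2,3),(3,4),(4,4),(3,3),(4,3),(4,2),(3,1),(4,1),(3,2)],
    [(2,2),(1,1),(2,1),(1,2),(1,3),(1,4),(2,4),(2,3),(3,4),(4,4),(4,3),(3,2),(3,1),(4,1),(4,2),(3,3)],
    [(2,2),(1,1),(2,1),(1,2),(1,3),(1,4),(2,4),(2,3),(3,2),(3,1),(4,1),(4,2),(3,3),(4,3),(4,4),(3,4)],
    [(2,2),(1,1),(2,1),(1,2),(1,3),(1,4),(2,4),(2,3),(3,4),(4,4),(3,3),(4,3),(3,2),(3,1),(4,2),(4,1)],
    [(2,2),(1,1),(2,1),(1,2),(1,3),(1,4),(2,4),(2,3),(3,4),(4,4),(3,3),(4,3),(3,2),(3,1),(4,1),(4,2)],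
    [(2,2),(1,1),(2,1),(1,2),(1,3),(1,4),(2,4),(2,3),(3,4),(4,4),(3,3),(3,2),(3,1),(4,1),(4,2),(4,3)],
    [(2,2),(1,1),(2,1),(1,2),(1,3),(1,4),(2,4),(2,3),(3,4),(3,3),(3,2),(3,1),(4,1),(4,2),(4,3),(4,4)],
    [(2,3),(1,4),(1,3),(1,2),(1,1),(2,1),(2,2),(3,1),(4,1),(3,2),(4,2),(4,3),(4,4),(3,3),(3,4),(2,4)],
    [(2,3),(1,4),(1,3),(2,4),(3,4),(4,4),(4,3),(3,3),(4,2),(4,1),(3,2),(2,1),(1,1),(1,2),(2,2),(3,1)],
    [(2,3),(1,4),(1,3),(2,4),(3,4),(4,4),(4,3),(3,3),(4,2),(4,1),(3,1),(2,1),(1,1),(1,2),(2,2),(3,2)],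
    [(2,3),(1,4),(1,3),(2,4),(3,4),(4,4),(4,3),(4,2),(4,1),(3,1),(3,2),(2,1),(1,1),(1,2),(2,2),(3,3)],
    [(2,3),(1,4),(1,3),(2,4),(3,3),(4,2),(4,1),(3,1),(2,1),(1,1),(1,2),(2,2),(3,2),(4,3),(4,4),(3,4)],
    [(2,3),(1,4),(1,3),(2,4),(3,4),(4,4),(4,3),(3,3),(4,2),(3,1),(2,1),(1,1),(1,2),(2,2),(3,2),(4,1)],
    [(2,3),(1,4),(1,3),(2,4),(3,4),(4,4),(4,3),(3,3),(2,2),(1,2),(1,1),(2,1),(3,1),(3,2),(4,1),(4,2)],
    [(2,3),(1,4),(1,3),(2,4),(3,4),(4,4),(3,3),(4,2),(4,1),(3,1),(2,1),(1,1),(1,2),(2,2),(3,2),(4,3)],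
    [(2,3),(1,4),(1,3),(2,4),(3,4),(4,3),(4,2),(4,1),(3,1),(3,2),(2,1),(1,1),(1,2),(2,2),(3,3),(4,4)],
    [(2,4),(1,4),(1,3),(1,2),(1,1),(2,1),(2,2),(2,3),(3,4),(4,4),(3,3),(4,3),(3,2),(4,1),(4,2),(3,1)],
    [(2,4),(1,4),(1,3),(1,2),(1,1),(2,1),(2,2),(2,3),(3,4),(4,4),(3,3),(4,3),(4,2),(3,1),(4,1),(3,2)],
    [(2,4),(1,4),(1,3),(1,2),(1,1),(2,1),(2,2),(2,3),(3,4),(4,4),(4,3),(3,2),(3,1),(4,1),(4,2),(3,3)],
    [(2,4),(1,4),(1,3),(1,2),(1,1),(2,1),(2,2),(2,3),(3,2),(3,1),(4,1),(4,2),(3,3),(4,3),(4,4),(3,4)],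
    [(2,4),(1,4),(1,3),(1,2),(1,1),(2,1),(2,2),(2,3),(3,4),(4,4),(3,3),(4,3),(3,2),(3,1),(4,2),(4,1)],
    [(2,4),(1,4),(1,3),(1,2),(1,1),(2,1),(2,2),(2,3),(3,4),(4,4),(3,3),(4,3),(3,2),(3,1),(4,1),(4,2)],
    [(2,4),(1,4),(1,3),(1,2),(1,1),(2,1),(2,2),(2,3),(3,4),(4,4),(3,3),(3,2),(3,1),(4,1),(4,2),(4,3)],
    [(2,4),(1,4),(1,3),(1,2),(1,1),(2,1),(2,2),(2,3),(3,4),(3,3),(3,2),(3,1),(4,1),(4,2),(4,3),(4,4)],
    [(3,1),(4,1),(4,2),(4,3),(4,4),(3,4),(2,4),(1,4),(1,3),(1,2),(1,1),(2,1),(2,2),(2,3),(3,3),(3,2)],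
    [(3,1),(4,1),(4,2),(4,3),(4,4),(3,4),(2,4),(1,4),(1,3),(1,2),(1,1),(2,1),(2,2),(2,3),(3,2),(3,3)],
    [(3,1),(4,1),(4,2),(4,3),(4,4),(3,3),(3,2),(2,1),(1,1),(1,2),(2,2),(1,3),(1,4),(2,3),(2,4),(3,4)],
    [(3,1),(2,1),(1,1),(1,2),(1,3),(1,4),(2,4),(2,3),(2,2),(3,2),(3,3),(3,4),(4,4),(4,3),(4,2),(4,1)],
    [(3,1),(4,1),(3,2),(2,1),(1,1),(1,2),(2,2),(1,3),(1,4),(2,3),(2,4),(3,4),(4,4),(3,3),(4,3),(4,2)],
    [(3,1),(4,1),(4,2),(3,2),(2,1),(1,1),(1,2),(2,2),(1,3),(1,4),(2,3),(2,4),(3,3),(3,4),(4,4),(4,3)],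
    [(3,1),(4,1),(4,2),(4,3),(3,2),(2,1),(1,1),(1,2),(2,2),(1,3),(1,4),(2,3),(2,4),(3,3),(3,4),(4,4)],
    [(3,2),(4,1),(3,1),(4,2),(4,3),(4,4),(3,4),(2,4),(1,4),(1,3),(2,3),(1,2),(1,1),(2,1),(2,2),(3,3)],
    [(3,2),(4,1),(3,1),(4,2),(4,3),(4,4),(3,3),(2,4),(1,4),(1,3),(1,2),(1,1),(2,1),(2,2),(2,3),(3,4)],
    [(3,2),(2,1),(1,1),(1,2),(1,3),(1,4),(2,4),(2,3),(2,2),(3,3),(3,4),(4,4),(4,3),(4,2),(3,1),(4,1)],
    [(3,2),(4,1),(3,1),(2,1),(1,1),(1,2),(2,2),(1,3),(1,4),(2,3),(2,4),(3,4),(4,4),(3,3),(4,3),(4,2)],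
    [(3,2),(4,1),(3,1),(4,2),(3,3),(2,4),(1,4),(1,3),(1,2),(1,1),(2,1),(2,2),(2,3),(3,4),(4,4),(4,3)],
    [(3,2),(4,1),(3,1),(4,2),(4,3),(3,4),(2,4),(1,4),(1,3),(2,3),(1,2),(1,1),(2,1),(2,2),(3,3),(4,4)],
    [(3,3),(4,4),(4,3),(4,2),(4,1),(3,1),(3,2),(2,1),(1,1),(1,2),(2,2),(1,3),(1,4),(2,3),(2,4),(3,4)],
    [(3,3),(4,4),(3,4),(4,3),(4,2),(3,1),(2,1),(1,1),(1,2),(2,2),(1,3),(1,4),(2,4),(2,3),(3,2),(4,1)],
    [(3,3),(4,4),(3,4),(4,3),(3,2),(2,1),(1,1),(1,2),(1,3),(1,4),(2,4),(2,3),(2,2),(3,1),(4,1),(4,2)],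
    [(3,3),(4,4),(3,4),(2,4),(1,4),(1,3),(2,3),(1,2),(1,1),(2,1),(2,2),(3,1),(4,1),(3,2),(4,2),(4,3)],
    [(3,3),(2,4),(1,4),(1,3),(1,2),(1,1),(2,1),(2,2),(2,3),(3,2),(3,1),(4,1),(4,2),(4,3),(3,4),(4,4)],
    [(3,4),(4,4),(4,3),(4,2),(3,1),(2,1),(1,1),(1,2),(1,3),(1,4),(2,4),(2,3),(2,2),(3,3),(3,2),(4,1)],
    [(3,4),(4,4),(4,3),(3,3),(2,4),(1,4),(1,3),(2,3),(1,2),(1,1),(2,1),(2,2),(3,1),(3,2),(4,1),(4,2)],
    [(3,4),(4,4),(3,3),(2,4),(1,4),(1,3),(2,3),(1,2),(1,1),(2,1),(2,2),(3,1),(4,1),(3,2),(4,2),(4,3)],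
    [(3,4),(2,4),(1,4),(1,3),(1,2),(1,1),(2,1),(2,2),(2,3),(3,3),(3,2),(3,1),(4,1),(4,2),(4,3),(4,4)],
    [(4,1),(3,1),(2,1),(1,1),(1,2),(1,3),(1,4),(2,4),(2,3),(2,2),(3,2),(3,3),(3,4),(4,4),(4,3),(4,2)],
    [(4,1),(3,1),(4,2),(3,2),(2,1),(1,1),(1,2),(2,2),(1,3),(1,4),(2,3),(2,4),(3,3),(3,4),(4,4),(4,3)],
    [(4,1),(3,1),(4,2),(4,3),(3,2),(2,1),(1,1),(1,2),(2,2),(1,3),(1,4),(2,3),(2,4),(3,3),(3,4),(4,4)],
    [(4,2),(4,1),(3,1),(2,1),(1,1),(1,2),(1,3),(1,4),(2,4),(2,3),(2,2),(3,2),(3,3),(3,4),(4,4),(4,3)],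
    [(4,2),(4,1),(3,1),(2,1),(1,1),(1,2),(1,3),(1,4),(2,4),(2,3),(2,2),(3,2),(3,3),(3,4),(4,3),(4,4)],
    [(4,3),(3,4),(2,4),(1,4),(1,3),(1,2),(1,1),(2,1),(2,2),(2,3),(3,2),(3,1),(4,1),(4,2),(3,3),(4,4)]]"

lemma witnesses_4_4_good: "list_all2 (\<lambda>(s, t). good_witness 4 4 s t) (admissible_pairs 4 4) witnesses_4_4"
  by code_simp

definition witnesses_4_5 :: "vtx list list" where
  "witnesses_4_5 = [[(1,1),(2,1),(3,1),(4,1),(4,2),(3,2),(4,3),(4,4),(4,5),(3,5),(2,5),(1,5),(1,4),(1,3),(2,2),(3,3),(2,4),(3,4),(2,3),(1,2)],
    [(1,1),(2,1),(1,2),(2,2),(3,1),(4,1),(4,2),(3,2),(4,3),(3,3),(4,4),(4,5),(3,5),(3,4),(2,3),(1,4),(1,5),(2,5),(2,4),(1,3)],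
    [(1,1),(2,1),(1,2),(1,3),(2,2),(3,1),(4,1),(4,2),(3,2),(4,3),(3,3),(2,3),(2,4),(3,4),(4,4),(4,5),(3,5),(2,5),(1,5),(1,4)],
    [(1,1),(2,1),(1,2),(1,3),(1,4),(2,5),(3,5),(4,5),(4,4),(3,4),(4,3),(4,2),(4,1),(3,1),(2,2),(3,2),(2,3),(3,3),(2,4),(1,5)],
    [(1,1),(2,1),(1,2),(1,3),(1,4),(1,5),(2,5),(2,4),(3,5),(4,5),(4,4),(3,4),(2,3),(3,3),(4,3),(4,2),(4,1),(3,1),(3,2),(2,2)],
    [(1,1),(2,1),(1,2),(1,3),(1,4),(1,5),(2,5),(2,4),(3,5),(4,5),(4,4),(3,4),(4,3),(3,3),(2,2),(3,1),(4,1),(4,2),(3,2),(2,3)],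
    [(1,1),(2,1),(1,2),(1,3),(1,4),(1,5),(2,5),(3,5),(4,5),(4,4),(3,4),(4,3),(4,2),(4,1),(3,1),(2,2),(3,2),(2,3),(3,3),(2,4)],
    [(1,1),(2,1),(1,2),(1,3),(1,4),(1,5),(2,4),(2,3),(2,2),(3,1),(4,1),(3,2),(4,2),(3,3),(4,3),(4,4),(4,5),(3,4),(3,5),(2,5)],
    [(1,1),(2,1),(1,2),(1,3),(1,4),(1,5),(2,5),(2,4),(3,5),(4,5),(4,4),(3,4),(2,3),(2,2),(3,3),(4,3),(3,2),(4,1),(4,2),(3,1)],
    [(1,1),(2,1),(1,2),(1,3),(1,4),(1,5),(2,5),(2,4),(3,5),(4,5),(4,4),(3,4),(2,3),(2,2),(3,1),(4,1),(4,2),(3,3),(4,3),(3,2)],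
    [(1,1),(2,1),(1,2),(1,3),(1,4),(1,5),(2,5),(2,4),(3,5),(4,5),(4,4),(3,4),(2,3),(2,2),(3,1),(4,1),(3,2),(4,2),(4,3),(3,3)],
    [(1,1),(2,1),(1,2),(1,3),(1,4),(1,5),(2,5),(2,4),(3,5),(4,5),(4,4),(4,3),(4,2),(4,1),(3,1),(2,2),(3,2),(2,3),(3,3),(3,4)],
    [(1,1),(2,1),(1,2),(1,3),(1,4),(1,5),(2,5),(2,4),(2,3),(2,2),(3,1),(4,1),(3,2),(4,2),(3,3),(4,3),(3,4),(4,4),(4,5),(3,5)],
    [(1,1),(2,1),(1,2),(1,3),(1,4),(1,5),(2,5),(2,4),(3,5),(4,5),(4,4),(3,4),(2,3),(2,2),(3,1),(3,2),(3,3),(4,3),(4,2),(4,1)],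
    [(1,1),(2,1),(1,2),(1,3),(1,4),(1,5),(2,5),(2,4),(3,5),(4,5),(4,4),(3,4),(2,3),(2,2),(3,1),(4,1),(3,2),(3,3),(4,3),(4,2)],
    [(1,1),(2,1),(1,2),(1,3),(1,4),(1,5),(2,5),(2,4),(3,5),(4,5),(4,4),(3,4),(2,3),(2,2),(3,1),(4,1),(3,2),(3,3),(4,2),(4,3)],
    [(1,1),(2,1),(1,2),(1,3),(1,4),(1,5),(2,5),(2,4),(3,5),(4,5),(3,4),(2,3),(2,2),(3,1),(4,1),(3,2),(4,2),(3,3),(4,3),(4,4)],
    [(1,1),(2,1),(1,2),(1,3),(1,4),(1,5),(2,5),(2,4),(3,5),(4,4),(4,3),(4,2),(4,1),(3,1),(2,2),(3,2),(2,3),(3,3),(3,4),(4,5)],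
    [(1,2),(1,1),(2,1),(3,1),(4,1),(4,2),(3,2),(2,2),(2,3),(1,4),(1,5),(2,5),(3,5),(4,5),(4,4),(4,3),(3,3),(3,4),(2,4),(1,3)],
    [(1,2),(1,1),(2,1),(3,1),(4,1),(4,2),(3,2),(2,2),(1,3),(2,3),(3,3),(4,3),(4,4),(4,5),(3,4),(3,5),(2,4),(1,5),(2,5),(1,4)],
    [(1,2),(1,1),(2,1),(3,1),(4,1),(4,2),(3,2),(2,2),(1,3),(1,4),(2,3),(3,3),(4,3),(4,4),(4,5),(3,4),(3,5),(2,4),(2,5),(1,5)],
    [(1,2),(1,3),(1,4),(1,5),(2,5),(2,4),(3,5),(4,5),(4,4),(3,4),(2,3),(3,3),(4,3),(4,2),(4,1),(3,1),(3,2),(2,2),(1,1),(2,1)],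
    [(1,2),(1,1),(2,1),(3,1),(4,1),(4,2),(3,2),(4,3),(4,4),(4,5),(3,5),(2,5),(1,5),(1,4),(1,3),(2,4),(3,4),(2,3),(3,3),(2,2)],
    [(1,2),(1,1),(2,1),(3,1),(4,1),(4,2),(3,2),(2,2),(1,3),(1,4),(1,5),(2,5),(2,4),(3,5),(4,5),(4,4),(4,3),(3,3),(3,4),(2,3)],
    [(1,2),(1,1),(2,1),(3,1),(4,1),(4,2),(3,2),(2,2),(1,3),(1,4),(1,5),(2,5),(3,5),(4,5),(4,4),(4,3),(3,3),(2,3),(3,4),(2,4)],
    [(1,2),(1,1),(2,1),(3,1),(4,1),(4,2),(3,2),(2,2),(1,3),(1,4),(1,5),(2,4),(2,3),(3,3),(4,3),(4,4),(4,5),(3,4),(3,5),(2,5)],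
    [(1,2),(1,1),(2,1),(2,2),(1,3),(1,4),(1,5),(2,5),(2,4),(2,3),(3,2),(3,3),(3,4),(3,5),(4,5),(4,4),(4,3),(4,2),(4,1),(3,1)],
    [(1,2),(1,1),(2,1),(3,1),(4,1),(4,2),(4,3),(4,4),(4,5),(3,5),(2,5),(1,5),(1,4),(1,3),(2,2),(2,3),(2,4),(3,4),(3,3),(3,2)],
    [(1,2),(1,1),(2,1),(3,1),(4,1),(4,2),(3,2),(2,2),(1,3),(1,4),(1,5),(2,5),(2,4),(2,3),(3,4),(3,5),(4,5),(4,4),(4,3),(3,3)],
    [(1,2),(1,1),(2,1),(3,1),(4,1),(4,2),(3,2),(2,2),(1,3),(1,4),(1,5),(2,5),(2,4),(2,3),(3,3),(4,3),(4,4),(3,5),(4,5),(3,4)],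
    [(1,2),(1,1),(2,1),(3,1),(4,1),(4,2),(3,2),(2,2),(1,3),(1,4),(1,5),(2,5),(2,4),(2,3),(3,3),(4,3),(3,4),(4,4),(4,5),(3,5)],
    [(1,2),(1,1),(2,1),(3,1),(2,2),(1,3),(1,4),(1,5),(2,5),(2,4),(2,3),(3,2),(3,3),(3,4),(3,5),(4,5),(4,4),(4,3),(4,2),(4,1)],
    [(1,2),(1,1),(2,1),(3,1),(4,1),(3,2),(2,2),(1,3),(1,4),(1,5),(2,5),(2,4),(2,3),(3,3),(3,4),(3,5),(4,5),(4,4),(4,3),(4,2)],
    [(1,2),(1,1),(2,1),(3,1),(4,1),(4,2),(3,2),(2,2),(1,3),(1,4),(1,5),(2,5),(2,4),(2,3),(3,3),(3,4),(3,5),(4,5),(4,4),(4,3)],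
    [(1,2),(1,1),(2,1),(3,1),(4,1),(4,2),(3,2),(2,2),(1,3),(1,4),(1,5),(2,5),(2,4),(2,3),(3,3),(4,3),(3,4),(3,5),(4,5),(4,4)],
    [(1,2),(1,1),(2,1),(3,1),(4,1),(4,2),(3,2),(2,2),(1,3),(1,4),(1,5),(2,5),(2,4),(2,3),(3,3),(4,3),(3,4),(3,5),(4,4),(4,5)],
    [(1,3),(1,2),(1,1),(2,1),(2,2),(3,1),(4,1),(4,2),(3,2),(4,3),(3,3),(2,3),(2,4),(3,4),(4,4),(4,5),(3,5),(2,5),(1,5),(1,4)],
    [(1,3),(1,2),(1,1),(2,1),(2,2),(3,1),(4,1),(4,2),(3,2),(4,3),(3,3),(2,3),(1,4),(2,4),(3,4),(4,4),(4,5),(3,5),(2,5),(1,5)],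
    [(1,3),(1,2),(2,3),(1,4),(1,5),(2,5),(2,4),(3,5),(4,5),(3,4),(4,4),(4,3),(3,3),(4,2),(4,1),(3,1),(3,2),(2,2),(1,1),(2,1)],
    [(1,3),(1,2),(1,1),(2,1),(3,1),(4,1),(4,2),(3,2),(4,3),(4,4),(4,5),(3,5),(2,5),(1,5),(1,4),(2,4),(3,4),(2,3),(3,3),(2,2)],
    [(1,3),(1,2),(1,1),(2,1),(2,2),(3,1),(4,1),(4,2),(3,2),(4,3),(3,3),(4,4),(4,5),(3,5),(3,4),(2,5),(1,5),(1,4),(2,4),(2,3)],
    [(1,3),(1,2),(1,1),(2,1),(2,2),(3,1),(4,1),(4,2),(3,2),(4,3),(3,3),(2,3),(1,4),(1,5),(2,5),(3,4),(4,4),(4,5),(3,5),(2,4)],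
    [(1,3),(1,2),(1,1),(2,1),(2,2),(3,1),(4,1),(4,2),(3,2),(4,3),(3,3),(2,3),(1,4),(1,5),(2,4),(3,4),(4,4),(4,5),(3,5),(2,5)],
    [(1,3),(1,2),(1,1),(2,1),(2,2),(2,3),(1,4),(1,5),(2,5),(2,4),(3,5),(4,5),(3,4),(4,4),(3,3),(4,3),(3,2),(4,1),(4,2),(3,1)],
    [(1,3),(1,2),(1,1),(2,1),(2,2),(3,1),(4,1),(4,2),(4,3),(4,4),(4,5),(3,5),(2,5),(1,5),(1,4),(2,4),(3,4),(2,3),(3,3),(3,2)],
    [(1,3),(1,2),(1,1),(2,1),(2,2),(3,1),(4,1),(4,2),(3,2),(4,3),(4,4),(4,5),(3,5),(2,5),(1,5),(1,4),(2,3),(2,4),(3,4),(3,3)],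
    [(1,3),(1,2),(1,1),(2,1),(2,2),(3,1),(4,1),(4,2),(3,2),(4,3),(3,3),(2,3),(1,4),(1,5),(2,4),(2,5),(3,5),(4,4),(4,5),(3,4)],
    [(1,3),(1,2),(1,1),(2,1),(2,2),(3,1),(4,1),(4,2),(3,2),(4,3),(3,3),(2,3),(1,4),(1,5),(2,4),(2,5),(3,4),(4,4),(4,5),(3,5)],
    [(1,3),(1,2),(1,1),(2,1),(2,2),(3,1),(4,2),(4,3),(4,4),(4,5),(3,5),(2,5),(1,5),(1,4),(2,4),(3,4),(2,3),(3,3),(3,2),(4,1)],
    [(1,3),(1,2),(1,1),(2,1),(2,2),(3,1),(4,1),(3,2),(2,3),(1,4),(1,5),(2,5),(2,4),(3,5),(4,5),(3,4),(4,4),(3,3),(4,3),(4,2)],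
    [(1,3),(1,2),(1,1),(2,1),(2,2),(3,1),(4,1),(4,2),(3,2),(2,3),(1,4),(1,5),(2,5),(2,4),(3,3),(3,4),(3,5),(4,5),(4,4),(4,3)],
    [(1,3),(1,2),(1,1),(2,1),(2,2),(3,1),(4,1),(4,2),(3,2),(4,3),(3,3),(2,3),(1,4),(1,5),(2,4),(2,5),(3,4),(3,5),(4,5),(4,4)],
    [(1,3),(1,2),(1,1),(2,1),(2,2),(3,1),(4,1),(4,2),(3,2),(4,3),(3,3),(2,3),(1,4),(1,5),(2,4),(2,5),(3,4),(4,4),(3,5),(4,5)],
    [(1,4),(1,3),(1,2),(1,1),(2,1),(2,2),(3,1),(4,1),(4,2),(3,2),(2,3),(3,3),(4,3),(4,4),(4,5),(3,4),(3,5),(2,4),(2,5),(1,5)],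
    [(1,4),(1,5),(2,5),(3,5),(4,5),(4,4),(3,4),(2,4),(1,3),(1,2),(2,3),(3,3),(4,3),(4,2),(4,1),(3,1),(3,2),(2,2),(1,1),(2,1)],
    [(1,4),(1,5),(2,5),(3,5),(4,5),(4,4),(3,4),(2,4),(1,3),(1,2),(1,1),(2,1),(3,1),(4,1),(4,2),(4,3),(3,2),(2,3),(3,3),(2,2)],
    [(1,4),(1,5),(2,5),(3,5),(4,5),(4,4),(3,4),(2,4),(1,3),(1,2),(1,1),(2,1),(2,2),(3,1),(4,1),(4,2),(4,3),(3,2),(3,3),(2,3)],
    [(1,4),(1,5),(2,5),(3,5),(4,5),(4,4),(3,4),(4,3),(4,2),(4,1),(3,1),(2,1),(1,1),(1,2),(1,3),(2,2),(3,2),(2,3),(3,3),(2,4)],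
    [(1,4),(1,5),(2,4),(1,3),(1,2),(1,1),(2,1),(2,2),(2,3),(3,2),(3,1),(4,1),(4,2),(3,3),(4,3),(4,4),(4,5),(3,4),(3,5),(2,5)],
    [(1,4),(1,5),(2,5),(3,5),(4,5),(4,4),(3,4),(2,4),(1,3),(1,2),(1,1),(2,1),(2,2),(2,3),(3,3),(4,3),(3,2),(4,1),(4,2),(3,1)],
    [(1,4),(1,5),(2,5),(3,5),(4,5),(4,4),(3,4),(2,4),(1,3),(1,2),(1,1),(2,1),(2,2),(2,3),(3,3),(4,3),(4,2),(3,1),(4,1),(3,2)],
    [(1,4),(1,5),(2,5),(3,5),(4,5),(4,4),(3,4),(2,4),(1,3),(1,2),(1,1),(2,1),(2,2),(2,3),(3,2),(3,1),(4,1),(4,2),(4,3),(3,3)],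
    [(1,4),(1,5),(2,5),(3,5),(4,5),(4,4),(4,3),(4,2),(4,1),(3,1),(2,1),(1,1),(1,2),(1,3),(2,2),(3,2),(2,3),(2,4),(3,3),(3,4)],
    [(1,4),(1,5),(2,5),(2,4),(1,3),(1,2),(1,1),(2,1),(2,2),(2,3),(3,2),(3,1),(4,1),(4,2),(3,3),(4,3),(3,4),(4,4),(4,5),(3,5)],
    [(1,4),(1,5),(2,5),(3,5),(4,5),(4,4),(3,4),(2,4),(1,3),(1,2),(1,1),(2,1),(2,2),(2,3),(3,3),(4,3),(3,2),(3,1),(4,2),(4,1)],
    [(1,4),(1,5),(2,5),(3,5),(4,5),(4,4),(3,4),(2,4),(1,3),(1,2),(1,1),(2,1),(2,2),(2,3),(3,3),(4,3),(3,2),(3,1),(4,1),(4,2)],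
    [(1,4),(1,5),(2,5),(3,5),(4,5),(4,4),(3,4),(2,4),(1,3),(1,2),(1,1),(2,1),(2,2),(2,3),(3,3),(3,2),(3,1),(4,1),(4,2),(4,3)],
    [(1,4),(1,5),(2,5),(3,5),(4,5),(3,4),(2,4),(1,3),(1,2),(1,1),(2,1),(2,2),(2,3),(3,3),(3,2),(3,1),(4,1),(4,2),(4,3),(4,4)],
    [(1,4),(1,5),(2,5),(3,5),(2,4),(1,3),(1,2),(1,1),(2,1),(2,2),(2,3),(3,4),(3,3),(3,2),(3,1),(4,1),(4,2),(4,3),(4,4),(4,5)],
    [(1,5),(1,4),(2,5),(3,5),(4,5),(4,4),(3,4),(2,4),(1,3),(1,2),(2,3),(3,3),(4,3),(4,2),(4,1),(3,1),(3,2),(2,2),(1,1),(2,1)],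
    [(1,5),(1,4),(2,5),(3,5),(4,5),(4,4),(3,4),(2,4),(1,3),(1,2),(1,1),(2,1),(3,1),(4,1),(4,2),(4,3),(3,2),(2,3),(3,3),(2,2)],
    [(1,5),(1,4),(2,5),(3,5),(4,5),(4,4),(3,4),(2,4),(1,3),(1,2),(1,1),(2,1),(2,2),(3,1),(4,1),(4,2),(4,3),(3,2),(3,3),(2,3)],
    [(1,5),(1,4),(2,5),(3,5),(4,5),(4,4),(3,4),(4,3),(4,2),(4,1),(3,1),(2,1),(1,1),(1,2),(1,3),(2,2),(3,2),(2,3),(3,3),(2,4)],
    [(1,5),(1,4),(1,3),(1,2),(1,1),(2,1),(2,2),(3,1),(4,1),(4,2),(3,2),(2,3),(2,4),(3,3),(4,3),(4,4),(4,5),(3,4),(3,5),(2,5)],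
    [(1,5),(1,4),(2,5),(3,5),(4,5),(4,4),(3,4),(2,4),(1,3),(1,2),(1,1),(2,1),(2,2),(2,3),(3,3),(4,3),(3,2),(4,1),(4,2),(3,1)],
    [(1,5),(1,4),(2,5),(3,5),(4,5),(4,4),(3,4),(2,4),(1,3),(1,2),(1,1),(2,1),(2,2),(2,3),(3,3),(4,3),(4,2),(3,1),(4,1),(3,2)],
    [(1,5),(1,4),(2,5),(3,5),(4,5),(4,4),(3,4),(2,4),(1,3),(1,2),(1,1),(2,1),(2,2),(2,3),(3,2),(3,1),(4,1),(4,2),(4,3),(3,3)],
    [(1,5),(1,4),(2,5),(3,5),(4,5),(4,4),(4,3),(4,2),(4,1),(3,1),(2,1),(1,1),(1,2),(1,3),(2,2),(3,2),(2,3),(2,4),(3,3),(3,4)],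
    [(1,5),(1,4),(2,5),(2,4),(1,3),(1,2),(1,1),(2,1),(2,2),(2,3),(3,2),(3,1),(4,1),(4,2),(3,3),(4,3),(3,4),(4,4),(4,5),(3,5)],
    [(1,5),(1,4),(2,5),(3,5),(4,5),(4,4),(3,4),(2,4),(1,3),(1,2),(1,1),(2,1),(2,2),(2,3),(3,3),(4,3),(3,2),(3,1),(4,2),(4,1)],
    [(1,5),(1,4),(2,5),(3,5),(4,5),(4,4),(3,4),(2,4),(1,3),(1,2),(1,1),(2,1),(2,2),(2,3),(3,3),(4,3),(3,2),(3,1),(4,1),(4,2)],
    [(1,5),(1,4),(2,5),(3,5),(4,5),(4,4),(3,4),(2,4),(1,3),(1,2),(1,1),(2,1),(2,2),(2,3),(3,3),(3,2),(3,1),(4,1),(4,2),(4,3)],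
    [(1,5),(1,4),(2,5),(3,5),(4,5),(3,4),(2,4),(1,3),(1,2),(1,1),(2,1),(2,2),(2,3),(3,3),(3,2),(3,1),(4,1),(4,2),(4,3),(4,4)],
    [(1,5),(1,4),(2,5),(3,5),(2,4),(1,3),(1,2),(1,1),(2,1),(2,2),(2,3),(3,4),(3,3),(3,2),(3,1),(4,1),(4,2),(4,3),(4,4),(4,5)],
    [(2,1),(1,1),(1,2),(1,3),(1,4),(1,5),(2,5),(2,4),(3,5),(4,5),(4,4),(3,4),(2,3),(3,3),(4,3),(4,2),(4,1),(3,1),(3,2),(2,2)],
    [(2,1),(1,1),(1,2),(1,3),(1,4),(1,5),(2,5),(2,4),(3,5),(4,5),(4,4),(3,4),(4,3),(3,3),(2,2),(3,1),(4,1),(4,2),(3,2),(2,3)],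
    [(2,1),(1,1),(1,2),(1,3),(1,4),(1,5),(2,5),(3,5),(4,5),(4,4),(3,4),(4,3),(4,2),(4,1),(3,1),(2,2),(3,2),(2,3),(3,3),(2,4)],
    [(2,1),(1,1),(1,2),(1,3),(1,4),(1,5),(2,4),(2,3),(2,2),(3,1),(4,1),(3,2),(4,2),(3,3),(4,3),(4,4),(4,5),(3,4),(3,5),(2,5)],
    [(2,1),(1,1),(1,2),(1,3),(1,4),(1,5),(2,5),(2,4),(3,5),(4,5),(4,4),(3,4),(2,3),(2,2),(3,3),(4,3),(3,2),(4,1),(4,2),(3,1)],
    [(2,1),(1,1),(1,2),(1,3),(1,4),(1,5),(2,5),(2,4),(3,5),(4,5),(4,4),(3,4),(2,3),(2,2),(3,1),(4,1),(4,2),(3,3),(4,3),(3,2)],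
    [(2,1),(1,1),(1,2),(1,3),(1,4),(1,5),(2,5),(2,4),(3,5),(4,5),(4,4),(3,4),(2,3),(2,2),(3,1),(4,1),(3,2),(4,2),(4,3),(3,3)],
    [(2,1),(1,1),(1,2),(1,3),(1,4),(1,5),(2,5),(2,4),(3,5),(4,5),(4,4),(4,3),(4,2),(4,1),(3,1),(2,2),(3,2),(2,3),(3,3),(3,4)],
    [(2,1),(1,1),(1,2),(1,3),(1,4),(1,5),(2,5),(2,4),(2,3),(2,2),(3,1),(4,1),(3,2),(4,2),(3,3),(4,3),(3,4),(4,4),(4,5),(3,5)],
    [(2,1),(1,1),(1,2),(1,3),(1,4),(1,5),(2,5),(2,4),(3,5),(4,5),(4,4),(3,4),(2,3),(2,2),(3,1),(3,2),(3,3),(4,3),(4,2),(4,1)],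
    [(2,1),(1,1),(1,2),(1,3),(1,4),(1,5),(2,5),(2,4),(3,5),(4,5),(4,4),(3,4),(2,3),(2,2),(3,1),(4,1),(3,2),(3,3),(4,3),(4,2)],
    [(2,1),(1,1),(1,2),(1,3),(1,4),(1,5),(2,5),(2,4),(3,5),(4,5),(4,4),(3,4),(2,3),(2,2),(3,1),(4,1),(3,2),(3,3),(4,2),(4,3)],
    [(2,1),(1,1),(1,2),(1,3),(1,4),(1,5),(2,5),(2,4),(3,5),(4,5),(3,4),(2,3),(2,2),(3,1),(4,1),(3,2),(4,2),(3,3),(4,3),(4,4)],
    [(2,1),(1,1),(1,2),(1,3),(1,4),(1,5),(2,5),(2,4),(3,5),(4,4),(4,3),(4,2),(4,1),(3,1),(2,2),(3,2),(2,3),(3,3),(3,4),(4,5)],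
    [(2,2),(1,1),(2,1),(1,2),(1,3),(1,4),(1,5),(2,5),(2,4),(3,5),(4,5),(4,4),(3,4),(4,3),(3,3),(4,2),(3,1),(4,1),(3,2),(2,3)],
    [(2,2),(1,1),(2,1),(1,2),(1,3),(1,4),(1,5),(2,5),(3,5),(4,5),(4,4),(3,4),(2,3),(3,2),(3,1),(4,1),(4,2),(4,3),(3,3),(2,4)],
    [(2,2),(1,1),(2,1),(1,2),(1,3),(1,4),(1,5),(2,4),(2,3),(3,2),(3,1),(4,1),(4,2),(3,3),(4,3),(4,4),(4,5),(3,4),(3,5),(2,5)],
    [(2,2),(1,1),(2,1),(1,2),(1,3),(1,4),(1,5),(2,5),(2,4),(2,3),(3,2),(3,3),(3,4),(3,5),(4,5),(4,4),(4,3),(4,2),(4,1),(3,1)],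
    [(2,2),(1,1),(2,1),(1,2),(1,3),(1,4),(1,5),(2,5),(2,4),(2,3),(3,3),(3,4),(3,5),(4,5),(4,4),(4,3),(4,2),(3,1),(4,1),(3,2)],
    [(2,2),(1,1),(2,1),(1,2),(1,3),(1,4),(1,5),(2,5),(2,4),(2,3),(3,2),(3,1),(4,1),(4,2),(4,3),(3,4),(3,5),(4,5),(4,4),(3,3)],
    [(2,2),(1,1),(2,1),(1,2),(1,3),(1,4),(1,5),(2,5),(2,4),(2,3),(3,2),(3,1),(4,1),(4,2),(3,3),(4,3),(4,4),(3,5),(4,5),(3,4)],
    [(2,2),(1,1),(2,1),(1,2),(1,3),(1,4),(1,5),(2,5),(2,4),(2,3),(3,2),(3,1),(4,1),(4,2),(3,3),(4,3),(3,4),(4,4),(4,5),(3,5)],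
    [(2,2),(1,1),(2,1),(1,2),(1,3),(1,4),(1,5),(2,5),(2,4),(2,3),(3,2),(3,3),(3,4),(3,5),(4,5),(4,4),(4,3),(4,2),(3,1),(4,1)],
    [(2,2),(1,1),(2,1),(1,2),(1,3),(1,4),(1,5),(2,5),(2,4),(2,3),(3,3),(3,4),(3,5),(4,5),(4,4),(4,3),(3,2),(3,1),(4,1),(4,2)],
    [(2,2),(1,1),(2,1),(1,2),(1,3),(1,4),(1,5),(2,5),(2,4),(2,3),(3,2),(3,1),(4,1),(4,2),(3,3),(3,4),(3,5),(4,5),(4,4),(4,3)],
    [(2,2),(1,1),(2,1),(1,2),(1,3),(1,4),(1,5),(2,5),(2,4),(2,3),(3,2),(3,1),(4,1),(4,2),(3,3),(4,3),(3,4),(3,5),(4,5),(4,4)],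
    [(2,2),(1,1),(2,1),(1,2),(1,3),(1,4),(1,5),(2,5),(2,4),(2,3),(3,2),(3,1),(4,1),(4,2),(3,3),(4,3),(3,4),(3,5),(4,4),(4,5)],
    [(2,3),(1,2),(1,1),(2,1),(2,2),(1,3),(1,4),(1,5),(2,5),(3,5),(4,5),(4,4),(3,4),(4,3),(3,2),(3,1),(4,1),(4,2),(3,3),(2,4)],
    [(2,3),(1,2),(1,1),(2,1),(2,2),(1,3),(1,4),(1,5),(2,4),(3,5),(4,5),(4,4),(3,3),(3,2),(3,1),(4,1),(4,2),(4,3),(3,4),(2,5)],
    [(2,3),(1,2),(1,1),(2,1),(2,2),(1,3),(1,4),(1,5),(2,5),(2,4),(3,5),(4,5),(3,4),(4,4),(3,3),(4,3),(3,2),(4,1),(4,2),(3,1)],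
    [(2,3),(1,2),(1,1),(2,1),(2,2),(1,3),(1,4),(1,5),(2,5),(2,4),(3,5),(4,5),(3,4),(4,4),(3,3),(4,3),(4,2),(3,1),(4,1),(3,2)],
    [(2,3),(1,2),(1,1),(2,1),(2,2),(1,3),(1,4),(1,5),(2,5),(2,4),(3,5),(4,5),(3,4),(4,4),(4,3),(3,2),(3,1),(4,1),(4,2),(3,3)],
    [(2,3),(1,2),(1,1),(2,1),(2,2),(1,3),(1,4),(1,5),(2,5),(2,4),(3,5),(4,5),(4,4),(3,3),(3,2),(3,1),(4,1),(4,2),(4,3),(3,4)],
    [(2,3),(1,2),(1,1),(2,1),(2,2),(1,3),(1,4),(1,5),(2,5),(2,4),(3,3),(3,2),(3,1),(4,1),(4,2),(4,3),(3,4),(4,4),(4,5),(3,5)],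
    [(2,3),(1,2),(1,1),(2,1),(2,2),(1,3),(1,4),(1,5),(2,5),(2,4),(3,5),(4,5),(3,4),(4,4),(3,3),(4,3),(3,2),(3,1),(4,2),(4,1)],
    [(2,3),(1,2),(1,1),(2,1),(2,2),(1,3),(1,4),(1,5),(2,5),(2,4),(3,5),(4,5),(3,4),(4,4),(3,3),(4,3),(3,2),(3,1),(4,1),(4,2)],
    [(2,3),(1,2),(1,1),(2,1),(2,2),(1,3),(1,4),(1,5),(2,5),(2,4),(3,5),(4,5),(3,4),(4,4),(3,3),(3,2),(3,1),(4,1),(4,2),(4,3)],
    [(2,3),(1,2),(1,1),(2,1),(2,2),(1,3),(1,4),(1,5),(2,5),(2,4),(3,5),(4,5),(3,4),(3,3),(3,2),(3,1),(4,1),(4,2),(4,3),(4,4)],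
    [(2,3),(1,2),(1,1),(2,1),(2,2),(1,3),(1,4),(1,5),(2,5),(2,4),(3,5),(3,4),(3,3),(3,2),(3,1),(4,1),(4,2),(4,3),(4,4),(4,5)],
    [(2,4),(1,5),(1,4),(1,3),(1,2),(1,1),(2,1),(2,2),(2,3),(3,2),(3,1),(4,1),(4,2),(3,3),(4,3),(4,4),(4,5),(3,4),(3,5),(2,5)],
    [(2,4),(1,5),(1,4),(2,5),(3,5),(4,5),(4,4),(3,4),(4,3),(3,3),(4,2),(4,1),(3,2),(2,3),(1,3),(1,2),(1,1),(2,1),(2,2),(3,1)],
    [(2,4),(1,5),(1,4),(2,5),(3,5),(4,5),(4,4),(3,4),(4,3),(3,3),(4,2),(4,1),(3,1),(2,1),(1,1),(1,2),(1,3),(2,2),(2,3),(3,2)],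
    [(2,4),(1,5),(1,4),(2,5),(3,5),(4,5),(4,4),(3,4),(4,3),(4,2),(4,1),(3,1),(2,1),(1,1),(1,2),(1,3),(2,2),(2,3),(3,2),(3,3)],
    [(2,4),(1,5),(1,4),(2,5),(3,5),(4,5),(4,4),(4,3),(4,2),(4,1),(3,1),(2,1),(1,1),(1,2),(1,3),(2,2),(3,2),(2,3),(3,3),(3,4)],
    [(2,4),(1,5),(1,4),(2,5),(3,4),(4,3),(4,2),(4,1),(3,1),(2,1),(1,1),(1,2),(1,3),(2,2),(2,3),(3,2),(3,3),(4,4),(4,5),(3,5)],
    [(2,4),(1,5),(1,4),(2,5),(3,5),(4,5),(4,4),(3,4),(4,3),(3,3),(4,2),(3,1),(2,1),(1,1),(1,2),(1,3),(2,2),(2,3),(3,2),(4,1)],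
    [(2,4),(1,5),(1,4),(2,5),(3,5),(4,5),(4,4),(3,4),(4,3),(3,3),(2,3),(1,3),(1,2),(1,1),(2,1),(2,2),(3,1),(3,2),(4,1),(4,2)],
    [(2,4),(1,5),(1,4),(2,5),(3,5),(4,5),(4,4),(3,4),(2,3),(1,3),(1,2),(1,1),(2,1),(2,2),(3,1),(4,1),(3,2),(3,3),(4,2),(4,3)],
    [(2,4),(1,5),(1,4),(2,5),(3,5),(4,5),(3,4),(4,3),(4,2),(4,1),(3,1),(2,1),(1,1),(1,2),(1,3),(2,2),(2,3),(3,2),(3,3),(4,4)],
    [(2,4),(1,5),(1,4),(2,5),(3,5),(4,4),(4,3),(4,2),(4,1),(3,1),(2,1),(1,1),(1,2),(1,3),(2,2),(3,2),(2,3),(3,3),(3,4),(4,5)],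
    [(2,5),(1,5),(1,4),(1,3),(1,2),(1,1),(2,1),(2,2),(2,3),(2,4),(3,5),(4,5),(3,4),(4,4),(3,3),(4,3),(3,2),(4,1),(4,2),(3,1)],
    [(2,5),(1,5),(1,4),(1,3),(1,2),(1,1),(2,1),(2,2),(3,1),(4,1),(4,2),(4,3),(4,4),(4,5),(3,5),(2,4),(3,4),(2,3),(3,3),(3,2)],
    [(2,5),(1,5),(1,4),(1,3),(1,2),(1,1),(2,1),(2,2),(3,1),(4,1),(4,2),(3,2),(2,3),(2,4),(3,5),(4,5),(3,4),(4,3),(4,4),(3,3)],
    [(2,5),(1,5),(1,4),(1,3),(1,2),(1,1),(2,1),(2,2),(3,1),(4,1),(4,2),(3,2),(2,3),(2,4),(3,3),(4,3),(4,4),(3,5),(4,5),(3,4)],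
    [(2,5),(1,5),(1,4),(1,3),(1,2),(1,1),(2,1),(2,2),(3,1),(4,1),(4,2),(3,2),(2,3),(2,4),(3,3),(4,3),(3,4),(4,4),(4,5),(3,5)],
    [(2,5),(1,5),(1,4),(1,3),(1,2),(1,1),(2,1),(2,2),(3,1),(4,2),(4,3),(4,4),(4,5),(3,5),(2,4),(3,4),(2,3),(3,3),(3,2),(4,1)],
    [(2,5),(1,5),(1,4),(1,3),(1,2),(1,1),(2,1),(2,2),(3,1),(4,1),(3,2),(2,3),(2,4),(3,5),(4,5),(3,4),(4,4),(3,3),(4,3),(4,2)],
    [(2,5),(1,5),(1,4),(1,3),(1,2),(1,1),(2,1),(2,2),(3,1),(4,1),(4,2),(3,2),(2,3),(2,4),(3,3),(3,4),(3,5),(4,5),(4,4),(4,3)],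
    [(2,5),(1,5),(1,4),(1,3),(1,2),(1,1),(2,1),(2,2),(3,1),(4,1),(4,2),(3,2),(2,3),(2,4),(3,3),(4,3),(3,4),(3,5),(4,5),(4,4)],
    [(2,5),(1,5),(1,4),(1,3),(1,2),(1,1),(2,1),(2,2),(3,1),(4,1),(4,2),(3,2),(2,3),(2,4),(3,3),(4,3),(3,4),(3,5),(4,4),(4,5)],
    [(3,1),(4,1),(4,2),(4,3),(4,4),(4,5),(3,5),(2,5),(1,5),(1,4),(1,3),(2,4),(3,4),(3,3),(2,3),(1,2),(1,1),(2,1),(2,2),(3,2)],
    [(3,1),(4,1),(4,2),(4,3),(3,2),(2,1),(1,1),(1,2),(2,2),(1,3),(1,4),(1,5),(2,5),(2,4),(2,3),(3,4),(3,5),(4,5),(4,4),(3,3)],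
    [(3,1),(4,1),(4,2),(4,3),(3,2),(2,1),(1,1),(1,2),(2,2),(1,3),(1,4),(1,5),(2,5),(2,4),(2,3),(3,3),(4,4),(3,5),(4,5),(3,4)],
    [(3,1),(4,1),(4,2),(4,3),(3,2),(2,1),(1,1),(1,2),(2,2),(1,3),(1,4),(1,5),(2,5),(2,4),(2,3),(3,3),(3,4),(4,4),(4,5),(3,5)],
    [(3,1),(2,1),(1,1),(1,2),(1,3),(2,2),(2,3),(1,4),(1,5),(2,5),(2,4),(3,5),(4,5),(3,4),(4,4),(3,3),(4,3),(3,2),(4,2),(4,1)],
    [(3,1),(4,1),(3,2),(2,1),(1,1),(1,2),(2,2),(1,3),(1,4),(1,5),(2,5),(2,4),(2,3),(3,3),(3,4),(3,5),(4,5),(4,4),(4,3),(4,2)],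
    [(3,1),(4,1),(4,2),(3,2),(2,1),(1,1),(1,2),(2,2),(1,3),(1,4),(1,5),(2,5),(2,4),(2,3),(3,3),(3,4),(3,5),(4,5),(4,4),(4,3)],
    [(3,1),(4,1),(4,2),(4,3),(3,2),(2,1),(1,1),(1,2),(2,2),(1,3),(1,4),(1,5),(2,5),(2,4),(2,3),(3,3),(3,4),(3,5),(4,5),(4,4)],
    [(3,1),(4,1),(4,2),(4,3),(3,2),(2,1),(1,1),(1,2),(2,2),(1,3),(1,4),(1,5),(2,5),(2,4),(2,3),(3,3),(3,4),(3,5),(4,4),(4,5)],
    [(3,2),(4,1),(3,1),(4,2),(4,3),(4,4),(4,5),(3,5),(2,5),(1,5),(1,4),(1,3),(2,4),(3,4),(2,3),(1,2),(1,1),(2,1),(2,2),(3,3)],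
    [(3,2),(4,1),(3,1),(4,2),(4,3),(4,4),(4,5),(3,5),(2,5),(1,5),(1,4),(1,3),(2,4),(3,3),(2,2),(1,1),(2,1),(1,2),(2,3),(3,4)],
    [(3,2),(4,1),(3,1),(4,2),(4,3),(4,4),(4,5),(3,4),(3,3),(2,2),(1,1),(2,1),(1,2),(1,3),(2,3),(1,4),(1,5),(2,4),(2,5),(3,5)],
    [(3,2),(2,1),(1,1),(1,2),(1,3),(2,2),(2,3),(1,4),(1,5),(2,5),(2,4),(3,5),(4,5),(3,4),(4,4),(3,3),(4,3),(4,2),(3,1),(4,1)],
    [(3,2),(4,1),(3,1),(2,1),(1,1),(1,2),(2,2),(1,3),(1,4),(1,5),(2,5),(2,4),(2,3),(3,3),(3,4),(3,5),(4,5),(4,4),(4,3),(4,2)],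
    [(3,2),(4,1),(3,1),(4,2),(3,3),(4,4),(4,5),(3,5),(2,5),(1,5),(1,4),(2,4),(1,3),(1,2),(1,1),(2,1),(2,2),(2,3),(3,4),(4,3)],
    [(3,2),(4,1),(3,1),(4,2),(4,3),(3,3),(2,2),(1,1),(2,1),(1,2),(1,3),(2,3),(1,4),(1,5),(2,4),(2,5),(3,4),(3,5),(4,5),(4,4)],
    [(3,2),(4,1),(3,1),(4,2),(4,3),(4,4),(3,3),(2,2),(1,1),(2,1),(1,2),(1,3),(2,3),(1,4),(1,5),(2,4),(2,5),(3,4),(3,5),(4,5)],
    [(3,3),(4,2),(4,1),(3,1),(2,1),(1,1),(1,2),(2,2),(3,2),(4,3),(4,4),(4,5),(3,5),(2,5),(1,5),(1,4),(1,3),(2,3),(2,4),(3,4)],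
    [(3,3),(4,2),(4,1),(3,1),(2,1),(1,1),(1,2),(2,2),(3,2),(4,3),(4,4),(4,5),(3,4),(2,3),(1,3),(1,4),(1,5),(2,4),(2,5),(3,5)],
    [(3,3),(4,2),(4,3),(4,4),(4,5),(3,5),(3,4),(2,5),(1,5),(1,4),(2,4),(1,3),(2,3),(1,2),(1,1),(2,1),(2,2),(3,1),(3,2),(4,1)],
    [(3,3),(4,3),(4,4),(4,5),(3,5),(3,4),(2,5),(1,5),(1,4),(2,4),(1,3),(2,3),(1,2),(1,1),(2,1),(2,2),(3,1),(3,2),(4,1),(4,2)],
    [(3,3),(4,2),(4,1),(3,1),(2,1),(1,1),(1,2),(2,2),(3,2),(2,3),(1,3),(1,4),(1,5),(2,4),(2,5),(3,5),(4,5),(3,4),(4,4),(4,3)],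
    [(3,3),(4,2),(4,1),(3,1),(2,1),(1,1),(1,2),(2,2),(3,2),(4,3),(3,4),(2,3),(1,3),(1,4),(1,5),(2,4),(2,5),(3,5),(4,5),(4,4)],
    [(3,3),(4,2),(4,1),(3,1),(2,1),(1,1),(1,2),(2,2),(3,2),(4,3),(4,4),(3,5),(2,5),(1,5),(1,4),(1,3),(2,3),(2,4),(3,4),(4,5)],
    [(3,4),(4,5),(4,4),(4,3),(4,2),(4,1),(3,1),(2,1),(1,1),(1,2),(1,3),(2,2),(3,2),(3,3),(2,3),(1,4),(1,5),(2,4),(2,5),(3,5)],
    [(3,4),(4,5),(3,5),(4,4),(4,3),(4,2),(3,1),(2,1),(1,1),(1,2),(1,3),(2,2),(3,3),(2,4),(1,5),(2,5),(1,4),(2,3),(3,2),(4,1)],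
    [(3,4),(4,5),(3,5),(4,4),(4,3),(3,3),(2,4),(1,5),(2,5),(1,4),(1,3),(2,3),(1,2),(1,1),(2,1),(2,2),(3,1),(3,2),(4,1),(4,2)],
    [(3,4),(4,5),(3,5),(4,4),(3,3),(4,2),(4,1),(3,1),(2,1),(1,1),(1,2),(2,2),(1,3),(1,4),(1,5),(2,5),(2,4),(2,3),(3,2),(4,3)],
    [(3,4),(4,5),(3,5),(2,5),(1,5),(1,4),(2,4),(1,3),(1,2),(1,1),(2,1),(2,2),(2,3),(3,3),(3,2),(3,1),(4,1),(4,2),(4,3),(4,4)],
    [(3,4),(2,5),(1,5),(1,4),(1,3),(2,4),(2,3),(1,2),(1,1),(2,1),(2,2),(3,1),(4,1),(3,2),(4,2),(3,3),(4,3),(4,4),(3,5),(4,5)],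
    [(3,5),(4,5),(4,4),(4,3),(3,4),(2,5),(1,5),(1,4),(2,4),(1,3),(1,2),(1,1),(2,1),(2,2),(2,3),(3,3),(3,2),(3,1),(4,2),(4,1)],
    [(3,5),(4,5),(4,4),(4,3),(3,4),(2,5),(1,5),(1,4),(2,4),(1,3),(1,2),(1,1),(2,1),(2,2),(2,3),(3,3),(3,2),(3,1),(4,1),(4,2)],
    [(3,5),(4,5),(4,4),(3,4),(2,5),(1,5),(1,4),(2,4),(1,3),(1,2),(1,1),(2,1),(2,2),(2,3),(3,3),(3,2),(3,1),(4,1),(4,2),(4,3)],
    [(3,5),(4,5),(3,4),(2,5),(1,5),(1,4),(2,4),(1,3),(1,2),(1,1),(2,1),(2,2),(2,3),(3,3),(3,2),(3,1),(4,1),(4,2),(4,3),(4,4)],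
    [(3,5),(2,5),(1,5),(1,4),(1,3),(2,4),(2,3),(1,2),(1,1),(2,1),(2,2),(3,1),(4,1),(3,2),(4,2),(3,3),(4,3),(3,4),(4,4),(4,5)],
    [(4,1),(3,1),(2,1),(1,1),(1,2),(1,3),(2,2),(3,2),(2,3),(1,4),(1,5),(2,5),(2,4),(3,5),(4,5),(3,4),(4,4),(3,3),(4,3),(4,2)],
    [(4,1),(3,1),(4,2),(3,2),(2,1),(1,1),(1,2),(2,2),(1,3),(1,4),(1,5),(2,5),(2,4),(2,3),(3,3),(3,4),(3,5),(4,5),(4,4),(4,3)],
    [(4,1),(3,1),(4,2),(4,3),(3,2),(2,1),(1,1),(1,2),(2,2),(1,3),(1,4),(1,5),(2,5),(2,4),(2,3),(3,3),(3,4),(3,5),(4,5),(4,4)],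
    [(4,1),(3,1),(4,2),(4,3),(3,2),(2,1),(1,1),(1,2),(2,2),(1,3),(1,4),(1,5),(2,5),(2,4),(2,3),(3,3),(3,4),(3,5),(4,4),(4,5)],
    [(4,2),(4,1),(3,1),(2,1),(1,1),(1,2),(1,3),(2,2),(3,2),(2,3),(1,4),(1,5),(2,5),(2,4),(3,3),(3,4),(3,5),(4,5),(4,4),(4,3)],
    [(4,2),(4,1),(3,1),(2,1),(1,1),(1,2),(1,3),(2,2),(3,2),(4,3),(3,3),(2,3),(1,4),(1,5),(2,4),(2,5),(3,4),(3,5),(4,5),(4,4)],
    [(4,2),(4,1),(3,1),(2,1),(1,1),(1,2),(1,3),(2,2),(3,2),(4,3),(3,3),(2,3),(1,4),(1,5),(2,4),(2,5),(3,4),(4,4),(3,5),(4,5)],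
    [(4,3),(4,2),(4,1),(3,1),(2,1),(1,1),(1,2),(1,3),(2,2),(3,2),(2,3),(1,4),(1,5),(2,5),(2,4),(3,3),(3,4),(3,5),(4,5),(4,4)],
    [(4,3),(4,2),(4,1),(3,1),(2,1),(1,1),(1,2),(1,3),(2,2),(3,2),(2,3),(1,4),(1,5),(2,5),(2,4),(3,3),(3,4),(3,5),(4,4),(4,5)],
    [(4,4),(3,5),(2,5),(1,5),(1,4),(1,3),(2,4),(2,3),(1,2),(1,1),(2,1),(2,2),(3,1),(4,1),(3,2),(4,2),(4,3),(3,3),(3,4),(4,5)]]"

lemma witnesses_4_5_good: "list_all2 (\<lambda>(s, t). good_witness 4 5 s t) (admissible_pairs 4 5) witnesses_4_5"
  by code_simp

lemma good_path_base:
  assumes "3 \<le> m" "m \<le> 4" "2 \<le> n" "n \<le> 5" "admissible m n s t"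
  shows "\<exists>Q. good_path m n s t Q"
proof -
  have "m = 3 \<or> m = 4" "n = 2 \<or> n = 3 \<or> n = 4 \<or> n = 5" using assms(1-4) by auto
  then show ?thesis
    using assms(5)
    by (elim disjE)
      (simp_all add: good_path_of_table[OF witnesses_3_2_good] good_path_of_table[OF witnesses_3_3_good]
      good_path_of_table[OF witnesses_3_4_good] good_path_of_table[OF witnesses_3_5_good]
      good_path_of_table[OF witnesses_4_2_good] good_path_of_table[OF witnesses_4_3_good]
      good_path_of_table[OF witnesses_4_4_good] good_path_of_table[OF witnesses_4_5_good])
qed

lemma good_path_exists:
  assumes "3 \<le> m" "2 \<le> n" "admissible m n s t"
  shows "\<exists>Q. good_path m n s t Q"
  using assms
proof (induction "nat (m + n)" arbitrary: m n s t rule: less_induct)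
  case less
  consider "5 \<le> m" | "m \<le> 4" "6 \<le> n" | "m \<le> 4" "n \<le> 5" by linarith
  then show ?case
  proof cases
    case 1
    have "\<And>s t. admissible (m - 2) n s t \<Longrightarrow> \<exists>Q. good_path (m - 2) n s t Q"
      using less.hyps[of "m - 2" n] less.prems(2) 1 by auto
    then show ?thesis using good_path_add_columns[OF 1 less.prems(2) _ less.prems(3)] by blast
  next
    case 2
    have "\<And>s t. admissible m (n - 2) s t \<Longrightarrow> \<exists>Q. good_path m (n - 2) s t Q"
      using less.hyps[of m "n - 2"] less.prems(1) 2 by auto
    then show ?thesis using good_path_add_rows[OF less.prems(1) 2 _ less.prems(3)] by blast
  next
    case 3
    then show ?thesis using good_path_base less.prems by blast
  qed
qed

theorem lemma6:
  fixes m n :: int and s t :: vtx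
  assumes "m \<ge> 3" and "n \<ge> 2"
    and "s \<in> R m n" and "t \<in> R m n" and "s \<noteq> t"
    and notF1: "\<not> vertex_cut (R m n) {s, t}"
    and notF2: "\<not> ((n = 2 \<and> {s, t} \<in> {{(1,1),(2,1)}, {(1,1),(2,2)}, {(2,1),(1,2)}})
                   \<or> (n \<ge> 3 \<and> {s, t} = {(1,1),(2,1)}))"
  shows "\<exists>Q. ham_path (R m n) s t Q \<and> edge_in_path (1,1) (2,1) Q"
proof -
  have "admissible m n s t"
    using assms(3-5) separating_pair_vertex_cut[OF _ assms(3-5)] notF1 forbidden_pairD notF2
    unfolding admissible_def by blast
  then obtain Q where "good_path m n s t Q" using good_path_exists assms(1,2) by blast
  then show ?thesis unfolding good_path_def by blast
qed

end
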